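(* Let $1\le r\le K\le d$ and let $\bm{A}=\begin{bmatrix}\widetilde{\bm{A}}&\bm{0}\\\bm{0}&\bm{0}\end{bmatrix}\in\mathbb{R}^{d\times K}$ with $\widetilde{\bm{A}}=\operatorname{diag}(a_1,\ldots,a_r)$, $a_1\ge\cdots\ge a_r>0$. Suppose there are indices $0=s_0<s_1<\cdots<s_p=r$ such that $a_{s_{i-1}+1}=\cdots=a_{s_i}$ for each $i$ and $a_{s_1}>\cdots>a_{s_p}$; let $h_i=s_i-s_{i-1}$ and $\delta_{ij}=\frac{a_{s_i}}{a_{s_j}}-\frac{a_{s_j}}{a_{s_i}}$ for $i\ne j$. Let $R(\bm{Q})=\bm{A}-\bm{Q}\bm{A}^T\bm{Q}$. For $\bm{q}\in\{\pm1\}^r$ let $$\mathcal{Q}_{\bm{q}}=\left\{\begin{bmatrix}\bm{U}\operatorname{diag}(\bm{q})\bm{U}^T&\bm{0}\\\bm{0}&\bm{V}\end{bmatrix}:\bm{U}=\operatorname{blkdiag}(\bm{U}_1,\ldots,\bm{U}_p),\ \bm{U}_i\in\mathcal{O}^{h_i},\ \bm{V}\in{\rm St}(d-r,K-r)\right\},$$ $$\mathcal{Q}^1_{\bm{q}}=\{\bm{U}\operatorname{diag}(\bm{q})\bm{U}^T:\bm{U}=\operatorname{blkdiag}(\bm{U}_1,\ldots,\bm{U}_p),\ \bm{U}_i\in\mathcal{O}^{h_i}\}.$$ Let $\bm{q}\in\{\pm1\}^r$ and let $\bm{Q}\in{\rm St}(d,K)$ satisfy $\operatorname{dist}(\bm{Q},\mathcal{Q}_{\bm{q}})<1$,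 and let $\bm{Q}_1$ be its upper-left $r\times r$ block. Then $$\operatorname{dist}^2(\bm{Q}_1,\mathcal{Q}^1_{\bm{q}})\le\frac1{a_r^2}\left(10+6(6p-5)\Big(\min_{i,j\in\{1,\ldots,p\},\,i\ne j}\delta_{ij}^2\Big)^{-1}\right)\|R(\bm{Q})\|_F^2.$$
   Context: $\mathcal{O}^m$ is the set of $m\times m$ orthogonal matrices; ${\rm St}(m,k)=\{\bm{V}\in\mathbb{R}^{m\times k}:\bm{V}^T\bm{V}=\bm{I}_k\}$; $\operatorname{blkdiag}$ is the block diagonal matrix; $\operatorname{dist}(\bm{Q},\mathcal{S})=\inf_{\bm{W}\in\mathcal{S}}\|\bm{Q}-\bm{W}\|_F$. When $p=1$ the minimum over the empty index set is interpreted as $+\infty$, so that its reciprocal is $0$. *)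

theory Defs
  imports "Jordan_Normal_Form.Matrix"
begin

(* Scalar sequences a, q, s follow the paper's 1-based indexing (a 1 .. a r, s 0 .. s p),
   matrix entries are 0-based as in JNF. *)

definition fro_norm :: "real mat \<Rightarrow> real" where
  "fro_norm M = sqrt (\<Sum>i<dim_row M. \<Sum>j<dim_col M. (M $$ (i,j))\<^sup>2)"

definition dist_set :: "real mat \<Rightarrow> real mat set \<Rightarrow> real" where
  "dist_set Q S = Inf ((\<lambda>W. fro_norm (Q - W)) ` S)"

definition orth_mats :: "nat \<Rightarrow> real mat set" where
  "orth_mats m = {U. U \<in> carrier_mat m m \<and> transpose_mat U * U = 1\<^sub>m m}"

definition stiefel :: "nat \<Rightarrow> nat \<Rightarrow> real mat set" where
  "stiefel m k = {V. V \<in> carrier_mat m k \<and> transpose_mat V * V = 1\<^sub>m k}"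

(* blkdiag(U_1,...,U_p) where block k occupies rows/cols s(k-1) .. s k - 1 (0-based) *)
definition blkdiag :: "(nat \<Rightarrow> nat) \<Rightarrow> nat \<Rightarrow> (nat \<Rightarrow> real mat) \<Rightarrow> real mat" where
  "blkdiag s p Us = mat (s p) (s p) (\<lambda>(i,j).
     if \<exists>k\<in>{1..p}. s (k-1) \<le> i \<and> i < s k \<and> s (k-1) \<le> j \<and> j < s k
     then (let k = (THE k. k \<in> {1..p} \<and> s (k-1) \<le> i \<and> i < s k)
           in Us k $$ (i - s (k-1), j - s (k-1)))
     else 0)"

definition diag_vec :: "nat \<Rightarrow> (nat \<Rightarrow> real) \<Rightarrow> real mat" where
  "diag_vec r q = mat r r (\<lambda>(i,j). if i = j then q (i+1) else 0)"

definition A_mat :: "nat \<Rightarrow> nat \<Rightarrow> nat \<Rightarrow> (nat \<Rightarrow> real) \<Rightarrow> real mat" where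
  "A_mat d K r a = mat d K (\<lambda>(i,j). if i = j \<and> i < r then a (i+1) else 0)"

definition R_res :: "real mat \<Rightarrow> real mat \<Rightarrow> real mat" where
  "R_res A Q = A - Q * transpose_mat A * Q"

definition blk_orth :: "(nat \<Rightarrow> nat) \<Rightarrow> nat \<Rightarrow> real mat set" where
  "blk_orth s p = {blkdiag s p Us | Us. \<forall>i\<in>{1..p}. Us i \<in> orth_mats (s i - s (i-1))}"

definition Qset1 :: "(nat \<Rightarrow> nat) \<Rightarrow> nat \<Rightarrow> (nat \<Rightarrow> real) \<Rightarrow> real mat set" where
  "Qset1 s p q = {U * diag_vec (s p) q * transpose_mat U | U. U \<in> blk_orth s p}"

definition Qset :: "nat \<Rightarrow> nat \<Rightarrow> (nat \<Rightarrow> nat) \<Rightarrow> nat \<Rightarrow> (nat \<Rightarrow> real) \<Rightarrow> real mat set" where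
  "Qset d K s p q = {four_block_mat (U * diag_vec (s p) q * transpose_mat U) (0\<^sub>m (s p) (K - s p))
                        (0\<^sub>m (d - s p) (s p)) V
                     | U V. U \<in> blk_orth s p \<and> V \<in> stiefel (d - s p) (K - s p)}"

definition upper_left :: "nat \<Rightarrow> real mat \<Rightarrow> real mat" where
  "upper_left r Q = mat r r (\<lambda>(i,j). Q $$ (i,j))"

definition delta :: "(nat \<Rightarrow> real) \<Rightarrow> (nat \<Rightarrow> nat) \<Rightarrow> nat \<Rightarrow> nat \<Rightarrow> real" where
  "delta a s i j = a (s i) / a (s j) - a (s j) / a (s i)"

(* (min_{i \<noteq> j} delta_ij^2)^{-1}, with value 0 when p = 1 (empty min = +infinity) *)
definition inv_min_delta_sq :: "(nat \<Rightarrow> real) \<Rightarrow> (nat \<Rightarrow> nat) \<Rightarrow> nat \<Rightarrow> real" where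
  "inv_min_delta_sq a s p =
     (if p \<le> 1 then 0
      else 1 / Min {(delta a s i j)\<^sup>2 | i j. i \<in> {1..p} \<and> j \<in> {1..p} \<and> i \<noteq> j})"

end

theory Submission
  imports Defs "Jordan_Normal_Form.Char_Poly" "HOL-Computational_Algebra.Fundamental_Theorem_Algebra"
begin

(* Let B be the upper-left r x r block of Q and alpha the diagonal of A.  Orthonormality of the
   columns of Q shows that ||R(Q)||^2 dominates
     sum Q_lm^2 (alpha_l - alpha_m)^2 + sum alpha_l alpha_m (Q_lm - Q_ml)^2 + sum alpha_l^2 t_l,
   where t_l is the mass of column l of Q below row r.  Up to the factors a_r^2 delta_ij^2 / 4,
   4 a_r^2 and a_r^2, the three terms dominate three defects of B: its mass outside the diagonal
   blocks, the skew-symmetric part of its diagonal blocks, and sum t_l.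

   Diagonalise the symmetric part S of the block-diagonal part of B blockwise, S = V diag(lam) V^T,
   and round it to W = V diag(sign lam) V^T.  As |lam_k| <= 1, ||S - W||^2 <= r - ||S||^2, which
   bounds ||B - W||^2 by twice the defects.

   Since dist(Q, Q_q) < 1 there is U diag(q) U^T in Q^1_q within distance 1 of B.  If
   ||B - W|| < 1 then W and U diag(q) U^T are within distance 2, and transporting signs along the
   doubly stochastic matrix ((V^T U)_km^2), which respects the blocks, shows that every diagonal
   block of W has as many eigenvalues +1 as q: W lies in Q^1_q.  Otherwise the bound exceeds 1 and
   U diag(q) U^T does the job.  The argument yields the smaller constant 1 + 8 / min delta_ij^2 and
   does not need the hypothesis 1 <= r. *)

section \<open>Entrywise matrix identities and the Frobenius norm\<close>

lemma index_mult_mat_sum: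
  assumes "A \<in> carrier_mat n m" "B \<in> carrier_mat m k" "i < n" "j < k"
  shows "(A * B) $$ (i,j) = (\<Sum>t<m. A $$ (i,t) * B $$ (t,j))"
  using assms by (simp add: scalar_prod_def row_def col_def atLeast0LessThan)

lemma index_transpose_mult_sum:
  assumes "V \<in> carrier_mat n m" "M \<in> carrier_mat n k" "i < m" "j < k"
  shows "(transpose_mat V * M) $$ (i,j) = (\<Sum>t<n. V $$ (t,i) * M $$ (t,j))"
  using assms by (subst index_mult_mat_sum[of _ m n _ k]) auto

lemma index_mult_mat_vec_sum:
  assumes "A \<in> carrier_mat n m" "v \<in> carrier_vec m" "i < n"
  shows "(A *\<^sub>v v) $ i = (\<Sum>j<m. A $$ (i,j) * v $ j)"
  using assms by (auto simp: scalar_prod_def row_def atLeast0LessThan intro!: sum.cong)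

lemma index_mat_diag_conj:
  fixes X Y :: "'a::comm_ring_1 mat"
  assumes "X \<in> carrier_mat p n" "Y \<in> carrier_mat q n" "i < p" "j < q"
  shows "(X * mat_diag n c * transpose_mat Y) $$ (i,j) = (\<Sum>k<n. X $$ (i,k) * c k * Y $$ (j,k))"
  using assms by (simp add: mat_diag_mult_right scalar_prod_def row_def col_def atLeast0LessThan mult.assoc)

lemma diag_vec_mat_diag: "diag_vec n q = mat_diag n (\<lambda>k. q (Suc k))"
  unfolding diag_vec_def mat_diag_def by (intro eq_matI) auto

lemma upper_left_carrier: "upper_left r A \<in> carrier_mat r r"
  by (simp add: upper_left_def)

lemma orthonormal_columns:
  assumes "V \<in> carrier_mat n m" "transpose_mat V * V = 1\<^sub>m m" "k < m" "k' < m"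
  shows "(\<Sum>i<n. V $$ (i,k) * V $$ (i,k')) = (if k = k' then 1 else 0)"
  using assms index_transpose_mult_sum[of V n m V m k k'] by simp

lemma orthonormal_rows:
  fixes V :: "real mat"
  assumes V: "V \<in> carrier_mat n n" and VV: "transpose_mat V * V = 1\<^sub>m n" and "l < n" "l' < n"
  shows "(\<Sum>k<n. V $$ (l,k) * V $$ (l',k)) = (if l = l' then 1 else 0)"
proof -
  have "V * transpose_mat V = 1\<^sub>m n"
    using mat_mult_left_right_inverse[OF _ V VV] V by simp
  thus ?thesis
    using assms index_mult_mat_sum[of V n n "transpose_mat V" n l l'] by simp
qed

lemma sum_swap_pairs:
  "(\<Sum>i\<in>I. \<Sum>j\<in>J. \<Sum>k\<in>K. \<Sum>k'\<in>L. f i j k k') = (\<Sum>k\<in>K. \<Sum>k'\<in>L. \<Sum>i\<in>I. \<Sum>j\<in>J. f i j k k')"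
proof -
  have "(\<Sum>i\<in>I. \<Sum>j\<in>J. \<Sum>k\<in>K. \<Sum>k'\<in>L. f i j k k') = (\<Sum>i\<in>I. \<Sum>k\<in>K. \<Sum>j\<in>J. \<Sum>k'\<in>L. f i j k k')"
    by (intro sum.cong refl) (rule sum.swap)
  also have "\<dots> = (\<Sum>i\<in>I. \<Sum>k\<in>K. \<Sum>k'\<in>L. \<Sum>j\<in>J. f i j k k')"
    by (intro sum.cong refl) (rule sum.swap)
  also have "\<dots> = (\<Sum>k\<in>K. \<Sum>i\<in>I. \<Sum>k'\<in>L. \<Sum>j\<in>J. f i j k k')"
    by (rule sum.swap)
  also have "\<dots> = (\<Sum>k\<in>K. \<Sum>k'\<in>L. \<Sum>i\<in>I. \<Sum>j\<in>J. f i j k k')"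
    by (intro sum.cong refl) (rule sum.swap)
  finally show ?thesis .
qed

lemma sum_squares_orthonormal_combination:
  fixes X Z :: "'i \<Rightarrow> nat \<Rightarrow> real" and c :: "nat \<Rightarrow> real"
  assumes orth: "\<And>k k'. k < n \<Longrightarrow> k' < n \<Longrightarrow> (\<Sum>i\<in>I. X i k * X i k') = (if k = k' then 1 else 0)"
  shows "(\<Sum>i\<in>I. \<Sum>j\<in>J. (\<Sum>k<n. X i k * c k * Z j k)\<^sup>2) = (\<Sum>k<n. (c k)\<^sup>2 * (\<Sum>j\<in>J. (Z j k)\<^sup>2))"
proof -
  have "(\<Sum>i\<in>I. \<Sum>j\<in>J. (\<Sum>k<n. X i k * c k * Z j k)\<^sup>2)
      = (\<Sum>i\<in>I. \<Sum>j\<in>J. \<Sum>k<n. \<Sum>k'<n. (X i k * X i k') * (c k * c k' * (Z j k * Z j k')))"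
    by (simp add: power2_eq_square sum_product algebra_simps)
  also have "\<dots> = (\<Sum>k<n. \<Sum>k'<n. \<Sum>i\<in>I. \<Sum>j\<in>J. (X i k * X i k') * (c k * c k' * (Z j k * Z j k')))"
    by (rule sum_swap_pairs)
  also have "\<dots> = (\<Sum>k<n. \<Sum>k'<n. (\<Sum>i\<in>I. X i k * X i k') * (\<Sum>j\<in>J. c k * c k' * (Z j k * Z j k')))"
    by (simp add: sum_product)
  also have "\<dots> = (\<Sum>k<n. \<Sum>k'<n. if k = k' then c k * c k * (\<Sum>j\<in>J. Z j k * Z j k) else 0)"
    by (intro sum.cong refl) (simp add: orth sum_distrib_left)
  also have "\<dots> = (\<Sum>k<n. (c k)\<^sup>2 * (\<Sum>j\<in>J. (Z j k)\<^sup>2))"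
    by (simp add: power2_eq_square)
  finally show ?thesis .
qed

lemma sum_products_conj_diag:
  fixes V U :: "nat \<Rightarrow> nat \<Rightarrow> real"
  shows "(\<Sum>l<n. \<Sum>l'<n. (\<Sum>k<m. V l k * c k * V l' k) * (\<Sum>k'<m'. U l k' * e k' * U l' k'))
       = (\<Sum>k<m. \<Sum>k'<m'. c k * e k' * (\<Sum>l<n. V l k * U l k')\<^sup>2)"
proof -
  have "(\<Sum>l<n. \<Sum>l'<n. (\<Sum>k<m. V l k * c k * V l' k) * (\<Sum>k'<m'. U l k' * e k' * U l' k'))
      = (\<Sum>l<n. \<Sum>l'<n. \<Sum>k<m. \<Sum>k'<m'. c k * e k' * ((V l k * U l k') * (V l' k * U l' k')))"
    by (simp add: sum_product mult_ac)
  also have "\<dots> = (\<Sum>k<m. \<Sum>k'<m'. \<Sum>l<n. \<Sum>l'<n. c k * e k' * ((V l k * U l k') * (V l' k * U l' k')))"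
    by (rule sum_swap_pairs)
  also have "\<dots> = (\<Sum>k<m. \<Sum>k'<m'. c k * e k' * ((\<Sum>l<n. V l k * U l k') * (\<Sum>l'<n. V l' k * U l' k')))"
    unfolding sum_product by (simp add: sum_distrib_left)
  finally show ?thesis by (simp add: power2_eq_square)
qed

lemma sum_sq_orthogonal_overlap:
  fixes V U :: "real mat"
  assumes V: "V \<in> carrier_mat n n" "transpose_mat V * V = 1\<^sub>m n"
    and U: "U \<in> carrier_mat n n" "transpose_mat U * U = 1\<^sub>m n" and k: "k < n"
  shows "(\<Sum>m<n. (\<Sum>l<n. V $$ (l,k) * U $$ (l,m))\<^sup>2) = 1"
  using sum_squares_orthonormal_combination[where X="\<lambda>m l. U $$ (l,m)" and Z="\<lambda>_ _. 1"
      and I="{..<n}" and J="{0::nat}" and n=n and c="\<lambda>l. V $$ (l,k)"]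
    orthonormal_rows[OF U] orthonormal_columns[OF V k k]
  by (simp add: mult.commute power2_eq_square)

lemma sum_sq_orthogonal_conj:
  fixes X :: "real mat"
  assumes "X \<in> carrier_mat n n" "transpose_mat X * X = 1\<^sub>m n"
  shows "(\<Sum>l<n. \<Sum>l'<n. (\<Sum>k<n. X $$ (l,k) * f k * X $$ (l',k))\<^sup>2) = (\<Sum>k<n. (f k)\<^sup>2)"
  using sum_squares_orthonormal_combination[where X="\<lambda>l k. X $$ (l,k)" and Z="\<lambda>l' k. X $$ (l',k)"
      and I="{..<n}" and J="{..<n}" and n=n and c=f]
    orthonormal_columns[OF assms] by (simp add: power2_eq_square)

text \<open>The squared entries of \<open>V\<^sup>T U\<close> form a doubly stochastic matrix which transports
  the eigenvalues of \<open>V diag c V\<^sup>T\<close> onto those of \<open>U diag e U\<^sup>T\<close>.\<close>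
lemma sum_sq_conj_diag_diff:
  fixes V U :: "real mat"
  assumes V: "V \<in> carrier_mat n n" "transpose_mat V * V = 1\<^sub>m n"
    and U: "U \<in> carrier_mat n n" "transpose_mat U * U = 1\<^sub>m n"
  shows "(\<Sum>l<n. \<Sum>l'<n. ((V * mat_diag n c * transpose_mat V) $$ (l,l') - (U * mat_diag n e * transpose_mat U) $$ (l,l'))\<^sup>2)
       = (\<Sum>k<n. \<Sum>m<n. (\<Sum>l<n. V $$ (l,k) * U $$ (l,m))\<^sup>2 * (c k - e m)\<^sup>2)"
proof -
  define G where "G k m = (\<Sum>l<n. V $$ (l,k) * U $$ (l,m))\<^sup>2" for k m
  have rows: "(\<Sum>m<n. G k m) = 1" if "k < n" for k
    using sum_sq_orthogonal_overlap[OF V U that] by (simp add: G_def)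
  have cols: "(\<Sum>k<n. G k m) = 1" if "m < n" for m
    using sum_sq_orthogonal_overlap[OF U V that] by (simp add: G_def mult.commute)
  define W1 where "W1 = V * mat_diag n c * transpose_mat V"
  define W2 where "W2 = U * mat_diag n e * transpose_mat U"
  have "(\<Sum>l<n. \<Sum>l'<n. (W1 $$ (l,l') - W2 $$ (l,l'))\<^sup>2)
      = (\<Sum>l<n. \<Sum>l'<n. (W1 $$ (l,l'))\<^sup>2) + (\<Sum>l<n. \<Sum>l'<n. (W2 $$ (l,l'))\<^sup>2)
        - 2 * (\<Sum>l<n. \<Sum>l'<n. W1 $$ (l,l') * W2 $$ (l,l'))"
    by (simp add: power2_diff sum.distrib sum_subtractf sum_distrib_left mult.assoc)
  also have "\<dots> = (\<Sum>k<n. (c k)\<^sup>2) + (\<Sum>m<n. (e m)\<^sup>2) - 2 * (\<Sum>k<n. \<Sum>m<n. c k * e m * G k m)"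
    using sum_sq_orthogonal_conj[OF V, of c] sum_sq_orthogonal_conj[OF U, of e]
      sum_products_conj_diag[where V="\<lambda>l k. V $$ (l,k)" and U="\<lambda>l k. U $$ (l,k)" and n=n and m=n and m'=n
        and c=c and e=e]
    by (simp add: W1_def W2_def index_mat_diag_conj[OF V(1) V(1)] index_mat_diag_conj[OF U(1) U(1)] G_def)
  also have "\<dots> = (\<Sum>k<n. \<Sum>m<n. G k m * (c k - e m)\<^sup>2)"
  proof -
    have "(\<Sum>k<n. \<Sum>m<n. G k m * (e m)\<^sup>2) = (\<Sum>m<n. (e m)\<^sup>2)"
      by (subst sum.swap) (simp add: cols sum_distrib_right[symmetric])
    moreover have "(\<Sum>k<n. \<Sum>m<n. G k m * (c k)\<^sup>2) = (\<Sum>k<n. (c k)\<^sup>2)"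
      by (simp add: rows sum_distrib_right[symmetric])
    ultimately show ?thesis
      by (simp add: power2_diff sum.distrib sum_subtractf sum_distrib_left algebra_simps)
  qed
  finally show ?thesis by (simp add: G_def W1_def W2_def)
qed

lemma permute_columns_orthogonal:
  fixes V :: "real mat"
  assumes \<pi>: "bij_betw \<pi> {..<n} {..<n}" and V: "V \<in> carrier_mat n n" "transpose_mat V * V = 1\<^sub>m n"
  defines "U \<equiv> mat n n (\<lambda>(i,k). V $$ (i, \<pi> k))"
  shows "transpose_mat U * U = 1\<^sub>m n"
proof (rule eq_matI)
  have U: "U \<in> carrier_mat n n" by (simp add: U_def)
  fix k k' assume "k < dim_row (1\<^sub>m n :: real mat)" "k' < dim_col (1\<^sub>m n :: real mat)"
  hence k: "k < n" and k': "k' < n" by auto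
  have "\<pi> k < n" "\<pi> k' < n" "\<pi> k = \<pi> k' \<longleftrightarrow> k = k'"
    using \<pi> k k' by (auto simp: bij_betw_def inj_on_def)
  thus "(transpose_mat U * U) $$ (k,k') = (1\<^sub>m n :: real mat) $$ (k,k')"
    using index_transpose_mult_sum[OF U U k k'] k k' orthonormal_columns[OF V, of "\<pi> k" "\<pi> k'"]
    by (simp add: U_def)
qed (auto simp: U_def)

lemma permute_columns_conj_diag:
  fixes V :: "real mat"
  assumes \<pi>: "bij_betw \<pi> {..<n} {..<n}" and V: "V \<in> carrier_mat n n"
  defines "U \<equiv> mat n n (\<lambda>(i,k). V $$ (i, \<pi> k))"
  shows "U * mat_diag n (\<lambda>k. c (\<pi> k)) * transpose_mat U = V * mat_diag n c * transpose_mat V"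
proof (rule eq_matI)
  have U: "U \<in> carrier_mat n n" by (simp add: U_def)
  fix i j assume "i < dim_row (V * mat_diag n c * transpose_mat V)" "j < dim_col (V * mat_diag n c * transpose_mat V)"
  hence i: "i < n" and j: "j < n" using V by auto
  have "(U * mat_diag n (\<lambda>k. c (\<pi> k)) * transpose_mat U) $$ (i,j) = (\<Sum>k<n. V $$ (i, \<pi> k) * c (\<pi> k) * V $$ (j, \<pi> k))"
    using index_mat_diag_conj[OF U U i j] i j by (simp add: U_def)
  also have "\<dots> = (\<Sum>k<n. V $$ (i,k) * c k * V $$ (j,k))"
    using sum.reindex_bij_betw[OF \<pi>, of "\<lambda>k. V $$ (i,k) * c k * V $$ (j,k)"] by simp
  finally show "(U * mat_diag n (\<lambda>k. c (\<pi> k)) * transpose_mat U) $$ (i,j) = (V * mat_diag n c * transpose_mat V) $$ (i,j)"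
    using index_mat_diag_conj[OF V V i j] by simp
qed (use V in \<open>simp_all add: U_def\<close>)

lemma fro_norm_sq: "(fro_norm M)\<^sup>2 = (\<Sum>i<dim_row M. \<Sum>j<dim_col M. (M $$ (i,j))\<^sup>2)"
  unfolding fro_norm_def by (simp add: sum_nonneg)

lemma fro_norm_nonneg: "fro_norm M \<ge> 0"
  unfolding fro_norm_def by (simp add: sum_nonneg)

lemma fro_norm_diff_sq:
  assumes "A \<in> carrier_mat n m" "B \<in> carrier_mat n m"
  shows "(fro_norm (A - B))\<^sup>2 = (\<Sum>i<n. \<Sum>j<m. (A $$ (i,j) - B $$ (i,j))\<^sup>2)"
  using assms by (simp add: fro_norm_sq)

lemma fro_norm_diff_sq_le:
  assumes "A \<in> carrier_mat n m" "B \<in> carrier_mat n m" "C \<in> carrier_mat n m"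
  shows "(fro_norm (A - C))\<^sup>2 \<le> 2 * (fro_norm (B - A))\<^sup>2 + 2 * (fro_norm (B - C))\<^sup>2"
proof -
  have "(A $$ (i,j) - C $$ (i,j))\<^sup>2 \<le> 2 * (B $$ (i,j) - A $$ (i,j))\<^sup>2 + 2 * (B $$ (i,j) - C $$ (i,j))\<^sup>2" for i j
    using zero_le_power2[of "2 * B $$ (i,j) - A $$ (i,j) - C $$ (i,j)"]
    by (simp add: power2_eq_square algebra_simps)
  thus ?thesis using assms
    by (simp add: fro_norm_diff_sq sum_distrib_left sum.distrib[symmetric] sum_mono)
qed

lemma fro_norm_upper_left_le:
  assumes "A \<in> carrier_mat n m" "r \<le> n" "r \<le> m"
  shows "(fro_norm (upper_left r A))\<^sup>2 \<le> (fro_norm A)\<^sup>2"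
proof -
  have "(\<Sum>i<r. \<Sum>j<r. (A $$ (i,j))\<^sup>2) \<le> (\<Sum>i<r. \<Sum>j<m. (A $$ (i,j))\<^sup>2)"
    using assms by (intro sum_mono sum_mono2) auto
  also have "\<dots> \<le> (\<Sum>i<n. \<Sum>j<m. (A $$ (i,j))\<^sup>2)"
    using assms by (intro sum_mono2) (auto intro: sum_nonneg)
  finally show ?thesis using assms by (simp add: fro_norm_sq upper_left_def)
qed

lemma dist_set_sq_le:
  assumes "W \<in> S"
  shows "(dist_set B S)\<^sup>2 \<le> (fro_norm (B - W))\<^sup>2"
proof -
  have "0 \<le> dist_set B S"
    unfolding dist_set_def using assms fro_norm_nonneg by (intro cInf_greatest) auto
  moreover have "dist_set B S \<le> fro_norm (B - W)"
    unfolding dist_set_def using assms fro_norm_nonneg by (intro cInf_lower bdd_belowI[of _ 0]) auto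
  ultimately show ?thesis by (intro power_mono)
qed

lemma stiefel_nonempty:
  assumes "k \<le> m"
  shows "mat m k (\<lambda>(i,j). if i = j then 1 else 0) \<in> stiefel m k"
proof -
  define V :: "real mat" where "V = mat m k (\<lambda>(i,j). if i = j then 1 else 0)"
  have "transpose_mat V * V = 1\<^sub>m k"
  proof (rule eq_matI)
    fix i j assume "i < dim_row (1\<^sub>m k :: real mat)" "j < dim_col (1\<^sub>m k :: real mat)"
    hence i: "i < k" and j: "j < k" by auto
    have "(transpose_mat V * V) $$ (i,j) = (\<Sum>t<m. V $$ (t,i) * V $$ (t,j))"
      by (rule index_transpose_mult_sum[of _ m k _ k]) (use i j in \<open>auto simp: V_def\<close>)
    also have "\<dots> = (\<Sum>t<m. if t = i then (if i = j then 1 else 0) else 0)"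
      using i j assms by (intro sum.cong refl) (auto simp: V_def)
    also have "\<dots> = (1\<^sub>m k :: real mat) $$ (i,j)" using i j assms by simp
    finally show "(transpose_mat V * V) $$ (i,j) = (1\<^sub>m k :: real mat) $$ (i,j)" .
  qed (auto simp: V_def)
  thus ?thesis by (simp add: stiefel_def V_def)
qed

section \<open>Elementary inequalities and counting\<close>

lemma ratio_gap_sq_le:
  fixes x y c :: real
  assumes c: "c > 0" and x: "x \<ge> c" and y: "y \<ge> c"
  shows "c\<^sup>2 * (x / y - y / x)\<^sup>2 \<le> 4 * (x - y)\<^sup>2"
proof -
  have xp: "x > 0" and yp: "y > 0" using c x y by auto
  have "c * (x / y - y / x) = (x - y) * (c / x + c / y)"
    using xp yp by (simp add: field_simps)
  hence "c\<^sup>2 * (x / y - y / x)\<^sup>2 = (x - y)\<^sup>2 * (c / x + c / y)\<^sup>2"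
    by (metis power_mult_distrib)
  moreover have "c / x \<le> 1" "c / y \<le> 1" "0 \<le> c / x" "0 \<le> c / y" using c x y xp yp by simp_all
  hence "(c / x + c / y)\<^sup>2 \<le> 2\<^sup>2" by (intro power_mono) auto
  ultimately show ?thesis
    using mult_left_mono[of "(c / x + c / y)\<^sup>2" 4 "(x - y)\<^sup>2"] by (simp add: mult.commute)
qed

lemma abs_sum_mult_le:
  fixes x y :: "'i \<Rightarrow> real"
  shows "\<bar>\<Sum>i\<in>I. x i * y i\<bar> \<le> ((\<Sum>i\<in>I. (x i)\<^sup>2) + (\<Sum>i\<in>I. (y i)\<^sup>2)) / 2"
proof -
  have "\<bar>x i * y i\<bar> \<le> ((x i)\<^sup>2 + (y i)\<^sup>2) / 2" for i
    using sum_squares_bound[of "\<bar>x i\<bar>" "\<bar>y i\<bar>"] by (simp add: abs_mult)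
  hence "\<bar>\<Sum>i\<in>I. x i * y i\<bar> \<le> (\<Sum>i\<in>I. ((x i)\<^sup>2 + (y i)\<^sup>2) / 2)"
    by (intro order_trans[OF sum_abs sum_mono])
  also have "\<dots> = ((\<Sum>i\<in>I. (x i)\<^sup>2) + (\<Sum>i\<in>I. (y i)\<^sup>2)) / 2"
    by (simp add: sum.distrib sum_divide_distrib[symmetric])
  finally show ?thesis .
qed

lemma sign_approx_sq:
  fixes x :: real
  assumes "\<bar>x\<bar> \<le> 1"
  shows "(x - (if x \<ge> 0 then 1 else -1))\<^sup>2 \<le> 1 - x\<^sup>2"
proof (cases "x \<ge> 0")
  case True
  hence "x * x \<le> x" using assms by (intro mult_right_le_one_le) auto
  thus ?thesis using True by (simp add: power2_eq_square algebra_simps)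
next
  case False
  hence "x * (1 + x) \<le> 0" using assms by (intro mult_nonpos_nonneg) auto
  thus ?thesis using False by (simp add: power2_eq_square algebra_simps)
qed

text \<open>Average each term with its transpose and use the parallelogram law.\<close>
lemma sum_sq_sym_skew_split:
  fixes f w :: "nat \<Rightarrow> nat \<Rightarrow> real"
  assumes w: "\<And>l m. l < n \<Longrightarrow> m < n \<Longrightarrow> w l m = w m l" and P: "\<And>l m. P l m = P m l"
  shows "(\<Sum>l<n. \<Sum>m<n. if P l m then (f l m - w l m)\<^sup>2 else 0)
       = (\<Sum>l<n. \<Sum>m<n. if P l m then ((f l m + f m l) / 2 - w l m)\<^sup>2 + ((f l m - f m l) / 2)\<^sup>2 else 0)"
proof -
  define g where "g l m = (if P l m then (f l m - w l m)\<^sup>2 else 0)" for l m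
  have "(\<Sum>l<n. \<Sum>m<n. g m l) = (\<Sum>l<n. \<Sum>m<n. g l m)" by (rule sum.swap)
  hence "(\<Sum>l<n. \<Sum>m<n. g l m) = (\<Sum>l<n. \<Sum>m<n. (g l m + g m l) / 2)"
    by (simp add: sum.distrib sum_divide_distrib[symmetric])
  also have "\<dots> = (\<Sum>l<n. \<Sum>m<n. if P l m then ((f l m + f m l) / 2 - w l m)\<^sup>2 + ((f l m - f m l) / 2)\<^sup>2 else 0)"
    by (intro sum.cong refl) (auto simp: g_def w P power2_eq_square field_simps)
  finally show ?thesis by (simp add: g_def)
qed

lemma sign_indicator_diff:
  fixes x y t :: real
  assumes "x = 1 \<or> x = -1" "y = 1 \<or> y = -1" "t = 1 \<or> t = -1"
  shows "\<bar>of_bool (x = t) - of_bool (y = t)\<bar> = (x - y)\<^sup>2 / 4"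
  using assms by auto

lemma sum_if_of_bool_card:
  fixes n :: nat
  shows "(\<Sum>k<n. if Q k then of_bool (P k) else 0 :: real) = real (card {k. k < n \<and> Q k \<and> P k})"
proof -
  have "(\<Sum>k<n. if Q k then of_bool (P k) else 0 :: real) = (\<Sum>k\<in>{k. k < n \<and> Q k \<and> P k}. 1)"
    by (rule sum.mono_neutral_cong_right) auto
  thus ?thesis by simp
qed

text \<open>Row and column sums rewrite both block sums as sums over the same coupling \<open>G\<close>.\<close>
lemma block_sum_transport:
  fixes G :: "nat \<Rightarrow> nat \<Rightarrow> real" and f g :: "nat \<Rightarrow> real"
  assumes rows: "\<And>k. k < n \<Longrightarrow> (\<Sum>m<n. G k m) = 1"
    and cols: "\<And>m. m < n \<Longrightarrow> (\<Sum>k<n. G k m) = 1"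
    and nonneg: "\<And>k m. G k m \<ge> 0"
    and blocks: "\<And>k m. k < n \<Longrightarrow> m < n \<Longrightarrow> c k \<noteq> c m \<Longrightarrow> G k m = 0"
  shows "\<bar>(\<Sum>k<n. if c k = b then f k else 0) - (\<Sum>m<n. if c m = b then g m else 0)\<bar>
           \<le> (\<Sum>k<n. \<Sum>m<n. G k m * \<bar>f k - g m\<bar>)"
proof -
  have G: "(if c m = b then G k m else 0) = (if c k = b then G k m else 0)" if "k < n" "m < n" for k m
    using blocks[OF that] by auto
  have F: "(\<Sum>k<n. if c k = b then f k else 0) = (\<Sum>k<n. \<Sum>m<n. (if c k = b then G k m else 0) * f k)"
    by (intro sum.cong refl) (simp add: rows sum_distrib_right[symmetric])
  have "(\<Sum>m<n. if c m = b then g m else 0) = (\<Sum>m<n. \<Sum>k<n. (if c m = b then G k m else 0) * g m)"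
    by (intro sum.cong refl) (simp add: cols sum_distrib_right[symmetric])
  also have "\<dots> = (\<Sum>k<n. \<Sum>m<n. (if c k = b then G k m else 0) * g m)"
    by (subst sum.swap) (intro sum.cong refl, simp add: G)
  finally have "(\<Sum>k<n. if c k = b then f k else 0) - (\<Sum>m<n. if c m = b then g m else 0)
      = (\<Sum>k<n. \<Sum>m<n. (if c k = b then G k m else 0) * (f k - g m))"
    unfolding F by (simp add: sum_subtractf[symmetric] right_diff_distrib)
  also have "\<bar>\<dots>\<bar> \<le> (\<Sum>k<n. \<Sum>m<n. \<bar>(if c k = b then G k m else 0) * (f k - g m)\<bar>)"
    by (rule order_trans[OF sum_abs sum_mono[OF sum_abs]])
  also have "\<dots> \<le> (\<Sum>k<n. \<Sum>m<n. G k m * \<bar>f k - g m\<bar>)"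
    using nonneg by (intro sum_mono) (simp add: abs_mult)
  finally show ?thesis .
qed

lemma label_preserving_permutation:
  fixes f g :: "nat \<Rightarrow> 'b"
  assumes cards: "\<And>t. card {k. k < n \<and> f k = t} = card {k. k < n \<and> g k = t}"
  shows "\<exists>\<pi>. bij_betw \<pi> {..<n} {..<n} \<and> (\<forall>k<n. g (\<pi> k) = f k)"
proof -
  define Af where "Af t = {k. k < n \<and> f k = t}" for t
  define Ag where "Ag t = {k. k < n \<and> g k = t}" for t
  have "\<exists>h. bij_betw h (Af t) (Ag t)" for t
    unfolding Af_def Ag_def by (rule finite_same_card_bij) (use cards in auto)
  then obtain h where h: "\<And>t. bij_betw (h t) (Af t) (Ag t)" by metis
  define \<pi> where "\<pi> k = h (f k) k" for k
  have maps: "\<pi> k < n \<and> g (\<pi> k) = f k" if "k < n" for k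
    using h[of "f k"] that unfolding \<pi>_def by (auto simp: bij_betw_def Af_def Ag_def)
  have inj: "inj_on \<pi> {..<n}"
  proof (rule inj_onI)
    fix k k' assume k: "k \<in> {..<n}" and k': "k' \<in> {..<n}" and eq: "\<pi> k = \<pi> k'"
    hence "f k = f k'" using maps[of k] maps[of k'] by auto
    moreover have "k \<in> Af (f k)" "k' \<in> Af (f k')" using k k' by (auto simp: Af_def)
    ultimately show "k = k'" using h[of "f k"] eq by (auto simp: \<pi>_def bij_betw_def inj_on_def)
  qed
  have "\<pi> ` {..<n} = {..<n}"
    using maps card_image[OF inj] by (intro card_subset_eq) auto
  thus ?thesis using inj maps by (auto simp: bij_betw_def)
qed

section \<open>Spectral theorem for real symmetric matrices\<close>

lemma complex_eigenvector_exists: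
  fixes S :: "complex mat"
  assumes S: "S \<in> carrier_mat n n" and n: "n > 0"
  shows "\<exists>z v. v \<in> carrier_vec n \<and> v \<noteq> 0\<^sub>v n \<and> S *\<^sub>v v = z \<cdot>\<^sub>v v"
proof -
  have "degree (char_poly S) = n" using degree_monic_char_poly[OF S] by auto
  hence "\<not> constant (poly (char_poly S))" using n by (simp add: constant_degree)
  then obtain z where "poly (char_poly S) z = 0" using fundamental_theorem_of_algebra by blast
  hence "eigenvalue S z" using eigenvalue_root_char_poly[OF S] by simp
  thus ?thesis using S unfolding eigenvalue_def eigenvector_def by auto
qed

lemma real_scalar_prod_self_pos:
  fixes x :: "real vec"
  assumes "x \<in> carrier_vec n" "x \<noteq> 0\<^sub>v n"
  shows "x \<bullet> x > 0"
  using conjugate_square_greater_0_vec[OF assms(1)] assms(2) by simp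

lemma normalized_eigenvector:
  fixes S :: "real mat"
  assumes S: "S \<in> carrier_mat n n" and w: "w \<in> carrier_vec n" "w \<bullet> w > 0" and Sw: "S *\<^sub>v w = lam \<cdot>\<^sub>v w"
  shows "\<exists>u. u \<in> carrier_vec n \<and> u \<bullet> u = 1 \<and> S *\<^sub>v u = lam \<cdot>\<^sub>v u"
proof (intro exI conjI)
  define u where "u = (1 / sqrt (w \<bullet> w)) \<cdot>\<^sub>v w"
  show u: "u \<in> carrier_vec n" using w by (simp add: u_def)
  have "u \<bullet> u = (1 / sqrt (w \<bullet> w)) * ((1 / sqrt (w \<bullet> w)) * (w \<bullet> w))"
    unfolding u_def using w by (simp add: smult_scalar_prod_distrib scalar_prod_smult_distrib)
  also have "\<dots> = 1" using w(2) by (simp add: field_simps)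
  finally show "u \<bullet> u = 1" .
  show "S *\<^sub>v u = lam \<cdot>\<^sub>v u" unfolding u_def using w S Sw
    by (simp add: mult_mat_vec smult_smult_assoc mult.commute)
qed

lemma complex_eigenvector_Re_Im:
  fixes S :: "real mat"
  assumes S: "S \<in> carrier_mat n n" and v: "v \<in> carrier_vec n"
    and ev: "map_mat complex_of_real S *\<^sub>v v = z \<cdot>\<^sub>v v"
  defines "x \<equiv> map_vec Re v" and "y \<equiv> map_vec Im v"
  shows "S *\<^sub>v x = Re z \<cdot>\<^sub>v x - Im z \<cdot>\<^sub>v y" and "S *\<^sub>v y = Im z \<cdot>\<^sub>v x + Re z \<cdot>\<^sub>v y"
proof -
  have Sc: "map_mat complex_of_real S \<in> carrier_mat n n" using S by simp
  have x: "x \<in> carrier_vec n" and y: "y \<in> carrier_vec n" using v by (auto simp: x_def y_def)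
  have evi: "(\<Sum>j<n. complex_of_real (S $$ (i,j)) * v $ j) = z * v $ i" if "i < n" for i
    using arg_cong[OF ev, of "\<lambda>w. w $ i"] index_mult_mat_vec_sum[OF Sc v that] that S v
    by simp
  show "S *\<^sub>v x = Re z \<cdot>\<^sub>v x - Im z \<cdot>\<^sub>v y"
  proof (rule eq_vecI)
    fix i assume "i < dim_vec (Re z \<cdot>\<^sub>v x - Im z \<cdot>\<^sub>v y)"
    hence i: "i < n" using y by simp
    have "(S *\<^sub>v x) $ i = Re (\<Sum>j<n. complex_of_real (S $$ (i,j)) * v $ j)"
      using index_mult_mat_vec_sum[OF S x i] v by (simp add: Re_sum x_def)
    thus "(S *\<^sub>v x) $ i = (Re z \<cdot>\<^sub>v x - Im z \<cdot>\<^sub>v y) $ i"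
      using evi[OF i] i x y v by (simp add: x_def y_def)
  qed (use S x y in auto)
  show "S *\<^sub>v y = Im z \<cdot>\<^sub>v x + Re z \<cdot>\<^sub>v y"
  proof (rule eq_vecI)
    fix i assume "i < dim_vec (Im z \<cdot>\<^sub>v x + Re z \<cdot>\<^sub>v y)"
    hence i: "i < n" using y by simp
    have "(S *\<^sub>v y) $ i = Im (\<Sum>j<n. complex_of_real (S $$ (i,j)) * v $ j)"
      using index_mult_mat_vec_sum[OF S y i] v by (simp add: Im_sum y_def)
    also have "\<dots> = Im (z * v $ i)" using evi[OF i] by simp
    finally show "(S *\<^sub>v y) $ i = (Im z \<cdot>\<^sub>v x + Re z \<cdot>\<^sub>v y) $ i"
      using i x y v by (simp add: x_def y_def)
  qed (use S x y in auto)
qed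

lemma map_vec_Re_Im_nonzero:
  assumes "v \<in> carrier_vec n" "v \<noteq> 0\<^sub>v n"
  shows "map_vec Re v \<noteq> 0\<^sub>v n \<or> map_vec Im v \<noteq> 0\<^sub>v n"
proof (rule ccontr)
  assume "\<not> ?thesis"
  hence Re: "map_vec Re v = 0\<^sub>v n" and Im: "map_vec Im v = 0\<^sub>v n" by auto
  have "v $ i = 0" if "i < n" for i
    using arg_cong[OF Re, of "\<lambda>w. w $ i"] arg_cong[OF Im, of "\<lambda>w. w $ i"] that assms(1)
    by (simp add: complex_eq_iff)
  hence "v = 0\<^sub>v n" using assms(1) by (intro eq_vecI) auto
  thus False using assms(2) by contradiction
qed

text \<open>For a complex eigenvector \<open>x + i y\<close> of a real symmetric matrix, symmetry forces
  \<open>Im z (x \<bullet> x + y \<bullet> y) = 0\<close>, so \<open>x\<close> and \<open>y\<close> are real eigenvectors.\<close>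
lemma real_symmetric_eigenvector:
  fixes S :: "real mat"
  assumes S: "S \<in> carrier_mat n n" and sym: "transpose_mat S = S" and n: "n > 0"
  shows "\<exists>lam u. u \<in> carrier_vec n \<and> u \<bullet> u = 1 \<and> S *\<^sub>v u = lam \<cdot>\<^sub>v u"
proof -
  obtain z v where v: "v \<in> carrier_vec n" "v \<noteq> 0\<^sub>v n"
    and ev: "map_mat complex_of_real S *\<^sub>v v = z \<cdot>\<^sub>v v"
    using complex_eigenvector_exists[of "map_mat complex_of_real S" n] S n by auto
  define x where "x = map_vec Re v"
  define y where "y = map_vec Im v"
  have x: "x \<in> carrier_vec n" and y: "y \<in> carrier_vec n" using v by (auto simp: x_def y_def)
  note Sx = complex_eigenvector_Re_Im(1)[OF S v(1) ev, folded x_def y_def]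
  note Sy = complex_eigenvector_Re_Im(2)[OF S v(1) ev, folded x_def y_def]
  have "(S *\<^sub>v y) \<bullet> x = (S *\<^sub>v x) \<bullet> y"
    using transpose_vec_mult_scalar[OF S x y] comm_scalar_prod[OF _ y, of "S *\<^sub>v x"] S x
    by (simp add: sym)
  moreover have "(S *\<^sub>v x) \<bullet> y = Re z * (x \<bullet> y) - Im z * (y \<bullet> y)"
    unfolding Sx using x y by (simp add: minus_scalar_prod_distrib[of _ n])
  moreover have "(S *\<^sub>v y) \<bullet> x = Im z * (x \<bullet> x) + Re z * (y \<bullet> x)"
    unfolding Sy using x y by (simp add: add_scalar_prod_distrib[of _ n])
  ultimately have Imz: "Im z * (x \<bullet> x + y \<bullet> y) = 0"
    using comm_scalar_prod[OF x y] by (simp add: algebra_simps)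
  have xy: "x \<noteq> 0\<^sub>v n \<or> y \<noteq> 0\<^sub>v n" using map_vec_Re_Im_nonzero[OF v] by (simp add: x_def y_def)
  moreover have "x \<bullet> x \<ge> 0" "y \<bullet> y \<ge> 0"
    using conjugate_square_ge_0_vec[of x] conjugate_square_ge_0_vec[of y] by simp_all
  ultimately have "x \<bullet> x + y \<bullet> y > 0"
    using real_scalar_prod_self_pos[OF x] real_scalar_prod_self_pos[OF y] by fastforce
  hence "Im z = 0" using Imz by simp
  hence "S *\<^sub>v x = Re z \<cdot>\<^sub>v x" "S *\<^sub>v y = Re z \<cdot>\<^sub>v y" using Sx Sy x y by auto
  with xy obtain w where "w \<in> carrier_vec n" "w \<bullet> w > 0" "S *\<^sub>v w = Re z \<cdot>\<^sub>v w"
    using real_scalar_prod_self_pos x y by blast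
  thus ?thesis using normalized_eigenvector[OF S] by blast
qed

text \<open>For \<open>w = 0\<close> the junk value \<open>2 / 0 = 0\<close> makes this the identity.\<close>
definition reflector :: "nat \<Rightarrow> real vec \<Rightarrow> real mat" where
  "reflector n w = mat n n (\<lambda>(i,j). (if i = j then 1 else 0) - 2 / (w \<bullet> w) * w $ i * w $ j)"

lemma reflector_carrier: "reflector n w \<in> carrier_mat n n"
  by (simp add: reflector_def)

lemma transpose_reflector: "transpose_mat (reflector n w) = reflector n w"
  by (intro eq_matI) (auto simp: reflector_def)

lemma reflector_involution:
  assumes w: "w \<in> carrier_vec n"
  shows "reflector n w * reflector n w = 1\<^sub>m n"
proof (rule eq_matI)
  define c where "c = 2 / (w \<bullet> w)"
  have ww: "(\<Sum>k<n. w $ k * w $ k) = w \<bullet> w" using w by (simp add: scalar_prod_def atLeast0LessThan)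
  have cc: "c * c * (w \<bullet> w) = 2 * c" by (simp add: c_def power2_eq_square)
  fix i j assume "i < dim_row (1\<^sub>m n :: real mat)" "j < dim_col (1\<^sub>m n :: real mat)"
  hence i: "i < n" and j: "j < n" by auto
  have "(reflector n w * reflector n w) $$ (i,j)
      = (\<Sum>k<n. ((if i = k then 1 else 0) - c * w $ i * w $ k) * ((if k = j then 1 else 0) - c * w $ k * w $ j))"
    using index_mult_mat_sum[OF reflector_carrier reflector_carrier i j] i j
    by (simp add: reflector_def c_def)
  also have "\<dots> = (\<Sum>k<n. (if k = i then (if i = j then 1 else 0) else 0) - (if k = i then c * w $ k * w $ j else 0)
      - (if k = j then c * w $ i * w $ k else 0) + c * c * w $ i * w $ j * (w $ k * w $ k))"
    by (intro sum.cong refl) (auto simp: algebra_simps)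
  also have "\<dots> = (if i = j then 1 else 0) - 2 * c * w $ i * w $ j + c * c * w $ i * w $ j * (\<Sum>k<n. w $ k * w $ k)"
    using i j by (simp add: sum.distrib sum_subtractf sum_distrib_left sum.delta' conj_commute)
  also have "c * c * w $ i * w $ j * (\<Sum>k<n. w $ k * w $ k) = (c * c * (w \<bullet> w)) * (w $ i * w $ j)"
    using ww by (simp add: algebra_simps)
  also have "\<dots> = 2 * c * w $ i * w $ j" unfolding cc by simp
  also have "(if i = j then 1 else 0) - 2 * c * w $ i * w $ j + 2 * c * w $ i * w $ j = (1\<^sub>m n :: real mat) $$ (i,j)"
    using i j by simp
  finally show "(reflector n w * reflector n w) $$ (i,j) = (1\<^sub>m n :: real mat) $$ (i,j)" .
qed (simp_all add: reflector_def)

lemma reflector_unit_vec: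
  assumes u: "u \<in> carrier_vec n" and uu: "u \<bullet> u = 1" and n: "n > 0"
  shows "reflector n (u - unit_vec n 0) *\<^sub>v u = unit_vec n 0"
proof (rule eq_vecI)
  define w where "w = u - unit_vec n 0"
  have w: "w \<in> carrier_vec n" using u by (simp add: w_def)
  have "w \<bullet> u = u \<bullet> u - unit_vec n 0 \<bullet> u"
    unfolding w_def using u by (simp add: minus_scalar_prod_distrib[of _ n])
  hence wu: "w \<bullet> u = 1 - u $ 0" using u uu n by simp
  have "w \<bullet> w = w \<bullet> u - w \<bullet> unit_vec n 0"
    unfolding w_def using u by (simp add: minus_scalar_prod_distrib[of _ n] comm_scalar_prod[of _ n])
  hence ww: "w \<bullet> w = 2 - 2 * u $ 0" using wu w n by (simp add: w_def u)
  fix i assume "i < dim_vec (unit_vec n 0 :: real vec)"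
  hence i: "i < n" by simp
  define c where "c = 2 / (w \<bullet> w)"
  have "(reflector n w *\<^sub>v u) $ i = (\<Sum>k<n. ((if i = k then 1 else 0) - c * w $ i * w $ k) * u $ k)"
    using index_mult_mat_vec_sum[OF reflector_carrier u i] i by (simp add: reflector_def c_def)
  also have "\<dots> = (\<Sum>k<n. (if k = i then u $ k else 0) - c * w $ i * (w $ k * u $ k))"
    by (intro sum.cong refl) (auto simp: algebra_simps)
  also have "\<dots> = u $ i - c * w $ i * (\<Sum>k<n. w $ k * u $ k)"
    using i by (simp add: sum_subtractf sum_distrib_left sum.delta')
  also have "\<dots> = u $ i - c * w $ i * (w \<bullet> u)"
    using i u by (simp add: scalar_prod_def atLeast0LessThan)
  also have "\<dots> = unit_vec n 0 $ i"
  proof (cases "w \<bullet> w = 0")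
    case True
    hence "w $ i = 0" using conjugate_square_eq_0_vec[OF w] i by simp
    thus ?thesis using i u by (simp add: w_def)
  next
    case False
    hence "c * (w \<bullet> u) = 1" using wu ww by (simp add: c_def field_simps)
    hence "u $ i - c * w $ i * (w \<bullet> u) = u $ i - w $ i" by (metis mult.commute mult.left_commute mult_1_right)
    thus ?thesis using i u by (simp add: w_def)
  qed
  finally show "(reflector n (u - unit_vec n 0) *\<^sub>v u) $ i = unit_vec n 0 $ i" unfolding w_def .
qed (use u in \<open>simp add: reflector_def\<close>)

lemma reflector_deflation:
  fixes S :: "real mat"
  assumes S: "S \<in> carrier_mat n n" and sym: "transpose_mat S = S"
    and u: "u \<in> carrier_vec n" "u \<bullet> u = 1" "S *\<^sub>v u = lam \<cdot>\<^sub>v u" and n: "n > 0"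
  defines "H \<equiv> reflector n (u - unit_vec n 0)"
  shows "transpose_mat (H * S * H) = H * S * H"
    and "\<And>i. i < n \<Longrightarrow> (H * S * H) $$ (i,0) = (if i = 0 then lam else 0)"
proof -
  have H: "H \<in> carrier_mat n n" "transpose_mat H = H" "H * H = 1\<^sub>m n" "H *\<^sub>v u = unit_vec n 0"
    unfolding H_def using reflector_carrier transpose_reflector reflector_involution reflector_unit_vec u n
    by auto
  have "(H * H) *\<^sub>v u = H *\<^sub>v (H *\<^sub>v u)"
    using H u by (intro assoc_mult_mat_vec) auto
  hence Hu: "H *\<^sub>v unit_vec n 0 = u" using H u by simp
  show "transpose_mat (H * S * H) = H * S * H"
    using H S sym by (simp add: transpose_mult[of _ n n _ n] assoc_mult_mat[of _ n n _ n _ n])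
  have "(H * S * H) *\<^sub>v unit_vec n 0 = H *\<^sub>v (S *\<^sub>v u)"
    using H S Hu by (simp add: assoc_mult_mat_vec[of _ n n _ n])
  also have "\<dots> = lam \<cdot>\<^sub>v unit_vec n 0" using H u by (simp add: mult_mat_vec)
  finally have col0: "(H * S * H) *\<^sub>v unit_vec n 0 = lam \<cdot>\<^sub>v unit_vec n 0" .
  fix i assume i: "i < n"
  have "(H * S * H) $$ (i,0) = row (H * S * H) i \<bullet> unit_vec n 0"
    using H S i n by (simp add: scalar_prod_right_unit)
  also have "\<dots> = (if i = 0 then lam else 0)"
    using arg_cong[OF col0, of "\<lambda>v. v $ i"] H S i by simp
  finally show "(H * S * H) $$ (i,0) = (if i = 0 then lam else 0)" .
qed

lemma border_orthogonal:
  fixes V :: "real mat"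
  assumes V: "V \<in> carrier_mat m m" "transpose_mat V * V = 1\<^sub>m m"
  defines "E \<equiv> four_block_mat (1\<^sub>m 1) (0\<^sub>m 1 m) (0\<^sub>m m 1) V"
  shows "E \<in> carrier_mat (Suc m) (Suc m)" and "transpose_mat E * E = 1\<^sub>m (Suc m)"
proof -
  have one: "1\<^sub>m 1 \<in> carrier_mat 1 1" by simp
  show "E \<in> carrier_mat (Suc m) (Suc m)"
    using four_block_carrier_mat[OF one V(1)] by (simp add: E_def)
  have "transpose_mat E = four_block_mat (1\<^sub>m 1) (0\<^sub>m 1 m) (0\<^sub>m m 1) (transpose_mat V)"
    unfolding E_def using V by (subst transpose_four_block_mat[of _ 1 1 _ m _ m]) auto
  also have "\<dots> * E = four_block_mat (1\<^sub>m 1) (0\<^sub>m 1 m) (0\<^sub>m m 1) (transpose_mat V * V)"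
    unfolding E_def using V by (subst mult_four_block_mat[of _ 1 1 _ m _ m]) auto
  finally show "transpose_mat E * E = 1\<^sub>m (Suc m)" using V four_block_one_mat[of 1 m] by simp
qed

lemma border_conj_diag:
  fixes M V :: "real mat"
  assumes M: "M \<in> carrier_mat (Suc m) (Suc m)" and sym: "transpose_mat M = M"
    and col0: "\<And>i. i < Suc m \<Longrightarrow> M $$ (i,0) = (if i = 0 then lam0 else 0)"
    and V: "V \<in> carrier_mat m m"
    and lower: "mat m m (\<lambda>(i,j). M $$ (Suc i, Suc j)) = V * mat_diag m lam * transpose_mat V"
  defines "E \<equiv> four_block_mat (1\<^sub>m 1) (0\<^sub>m 1 m) (0\<^sub>m m 1) V"
  shows "M = E * mat_diag (Suc m) (\<lambda>k. if k = 0 then lam0 else lam (k - 1)) * transpose_mat E"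
proof (rule eq_matI)
  define D where "D = (\<lambda>k. if k = 0 then lam0 else lam (k - 1))"
  have one: "1\<^sub>m 1 \<in> carrier_mat 1 1" by simp
  have E: "E \<in> carrier_mat (Suc m) (Suc m)"
    using four_block_carrier_mat[OF one V] by (simp add: E_def)
  have Ee: "E $$ (i,j) = (if i = 0 \<and> j = 0 then 1 else if i = 0 \<or> j = 0 then 0 else V $$ (i - 1, j - 1))"
    if "i < Suc m" "j < Suc m" for i j
    using that V by (simp add: E_def)
  fix i j assume "i < dim_row (E * mat_diag (Suc m) D * transpose_mat E)"
    "j < dim_col (E * mat_diag (Suc m) D * transpose_mat E)"
  hence i: "i < Suc m" and j: "j < Suc m" using E by auto
  have "(E * mat_diag (Suc m) D * transpose_mat E) $$ (i,j)
      = E $$ (i,0) * D 0 * E $$ (j,0) + (\<Sum>k<m. E $$ (i,Suc k) * D (Suc k) * E $$ (j,Suc k))"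
    unfolding index_mat_diag_conj[OF E E i j] by (rule sum.lessThan_Suc_shift)
  also have "\<dots> = M $$ (i,j)"
  proof (cases "i = 0 \<or> j = 0")
    case True
    have "M $$ (0,j) = M $$ (j,0)" using arg_cong[OF sym, of "\<lambda>A. A $$ (j,0)"] M j by simp
    thus ?thesis using True i j col0 by (auto simp: Ee D_def)
  next
    case False
    then obtain i' j' where ij: "i = Suc i'" "j = Suc j'" by (meson not0_implies_Suc)
    hence i': "i' < m" and j': "j' < m" using i j by auto
    have "(\<Sum>k<m. E $$ (i,Suc k) * D (Suc k) * E $$ (j,Suc k)) = (V * mat_diag m lam * transpose_mat V) $$ (i',j')"
      using index_mat_diag_conj[OF V V i' j'] ij i j by (simp add: Ee D_def)
    also have "\<dots> = M $$ (i,j)" using arg_cong[OF lower, of "\<lambda>A. A $$ (i',j')"] i' j' ij by simp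
    finally show ?thesis using ij i j by (simp add: Ee)
  qed
  finally show "M $$ (i,j) = (E * mat_diag (Suc m) (\<lambda>k. if k = 0 then lam0 else lam (k - 1)) * transpose_mat E) $$ (i,j)"
    unfolding D_def by simp
qed (use M V in \<open>simp_all add: E_def\<close>)

lemma involution_conj_diag:
  fixes S H E D :: "real mat"
  assumes S: "S \<in> carrier_mat n n" and D: "D \<in> carrier_mat n n"
    and H: "H \<in> carrier_mat n n" "transpose_mat H = H" "H * H = 1\<^sub>m n"
    and E: "E \<in> carrier_mat n n" "transpose_mat E * E = 1\<^sub>m n"
    and HSH: "H * S * H = E * D * transpose_mat E"
  shows "S = (H * E) * D * transpose_mat (H * E)" and "transpose_mat (H * E) * (H * E) = 1\<^sub>m n"
proof -
  have C: "A * B \<in> carrier_mat n n" if "A \<in> carrier_mat n n" "B \<in> carrier_mat n n" for A B :: "real mat"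
    using that by simp
  note assoc = assoc_mult_mat[of _ n n _ n _ n]
  have "S = (H * H) * S * (H * H)" by (simp only: H(3)) (use S in simp)
  also have "\<dots> = H * (H * S * H) * H" using H(1) S by (simp add: C assoc)
  also have "\<dots> = (H * E) * D * transpose_mat (H * E)"
    unfolding HSH using H E D by (simp add: C assoc transpose_mult[of _ n n])
  finally show "S = (H * E) * D * transpose_mat (H * E)" .
  have "transpose_mat (H * E) * (H * E) = transpose_mat E * (H * H) * E"
    using H(1,2) E(1) by (simp add: C assoc transpose_mult[of _ n n])
  thus "transpose_mat (H * E) * (H * E) = 1\<^sub>m n" using E by (simp add: H(3))
qed

text \<open>Induction on the dimension: a reflector mapping a unit eigenvector to the first
  basis vector splits off a \<open>1 \<times> 1\<close> block.\<close>
theorem real_symmetric_spectral: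
  fixes S :: "real mat"
  assumes "S \<in> carrier_mat n n" and "transpose_mat S = S"
  shows "\<exists>V lam. V \<in> carrier_mat n n \<and> transpose_mat V * V = 1\<^sub>m n \<and> S = V * mat_diag n lam * transpose_mat V"
  using assms
proof (induction n arbitrary: S)
  case 0
  hence "S = 1\<^sub>m 0 * mat_diag 0 (\<lambda>_. 0) * transpose_mat (1\<^sub>m 0)" by (intro eq_matI) auto
  thus ?case by (intro exI[of _ "1\<^sub>m 0"] exI[of _ "\<lambda>_. 0"]) auto
next
  case (Suc m S)
  obtain lam0 u where u: "u \<in> carrier_vec (Suc m)" "u \<bullet> u = 1" "S *\<^sub>v u = lam0 \<cdot>\<^sub>v u"
    using real_symmetric_eigenvector[OF Suc.prems] by auto
  define H where "H = reflector (Suc m) (u - unit_vec (Suc m) 0)"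
  have H: "H \<in> carrier_mat (Suc m) (Suc m)" "transpose_mat H = H" "H * H = 1\<^sub>m (Suc m)"
    unfolding H_def using reflector_carrier transpose_reflector reflector_involution u by auto
  define M where "M = H * S * H"
  have M: "M \<in> carrier_mat (Suc m) (Suc m)" using H Suc.prems by (simp add: M_def)
  note defl = reflector_deflation[OF Suc.prems u, folded H_def M_def, simplified]
  define M' where "M' = mat m m (\<lambda>(i,j). M $$ (Suc i, Suc j))"
  have "M $$ (a,b) = M $$ (b,a)" if "a < Suc m" "b < Suc m" for a b
    using arg_cong[OF defl(1), of "\<lambda>A. A $$ (b,a)"] M that by simp
  hence "transpose_mat M' = M'" by (intro eq_matI) (auto simp: M'_def)
  then obtain V' lam where V': "V' \<in> carrier_mat m m" "transpose_mat V' * V' = 1\<^sub>m m"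
    "M' = V' * mat_diag m lam * transpose_mat V'"
    using Suc.IH[of M'] by (auto simp: M'_def)
  define E where "E = four_block_mat (1\<^sub>m 1) (0\<^sub>m 1 m) (0\<^sub>m m 1) V'"
  define D where "D = mat_diag (Suc m) (\<lambda>k. if k = 0 then lam0 else lam (k - 1))"
  have E: "E \<in> carrier_mat (Suc m) (Suc m)" "transpose_mat E * E = 1\<^sub>m (Suc m)"
    using border_orthogonal[OF V'(1,2)] by (simp_all add: E_def)
  have "H * S * H = E * D * transpose_mat E"
    using border_conj_diag[OF M defl V'(1) V'(3)[unfolded M'_def]] by (simp add: M_def E_def D_def)
  from involution_conj_diag[OF Suc.prems(1) _ H E this]
  show ?case using H E unfolding D_def by (intro exI[of _ "H * E"]) auto
qed

section \<open>Block partitions\<close>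

locale block_partition =
  fixes s :: "nat \<Rightarrow> nat" and p :: nat
  assumes s0: "s 0 = 0" and s_step: "\<And>i. i < p \<Longrightarrow> s i < s (Suc i)"
begin

lemma s_strict_mono: "i < j \<Longrightarrow> j \<le> p \<Longrightarrow> s i < s j"
proof (induction j)
  case (Suc j)
  thus ?case using s_step by (cases "i = j") (auto intro: less_trans)
qed simp

lemma s_mono: "i \<le> j \<Longrightarrow> j \<le> p \<Longrightarrow> s i \<le> s j"
  using s_strict_mono by (cases "i = j") (auto simp: le_less)

text \<open>Blocks are numbered from \<open>1\<close>, as in the paper, while indices start at \<open>0\<close>.\<close>
definition blk :: "nat \<Rightarrow> nat" where
  "blk l = (THE k. k \<in> {1..p} \<and> s (k-1) \<le> l \<and> l < s k)"

definition off :: "nat \<Rightarrow> nat" where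
  "off l = l - s (blk l - 1)"

definition bsz :: "nat \<Rightarrow> nat" where
  "bsz k = s k - s (k - 1)"

lemma blk_unique:
  assumes "k \<in> {1..p}" "s (k-1) \<le> l" "l < s k" "k' \<in> {1..p}" "s (k'-1) \<le> l" "l < s k'"
  shows "k = k'"
proof (rule ccontr)
  assume "k \<noteq> k'"
  then consider "k < k'" | "k' < k" by linarith
  thus False
  proof cases
    case 1
    hence "s k \<le> s (k'-1)" using assms by (intro s_mono) auto
    thus False using assms by linarith
  next
    case 2
    hence "s k' \<le> s (k-1)" using assms by (intro s_mono) auto
    thus False using assms by linarith
  qed
qed

lemma blk_exists:
  assumes "l < s p"
  shows "\<exists>k. k \<in> {1..p} \<and> s (k-1) \<le> l \<and> l < s k"
proof -
  define k where "k = (LEAST k. l < s k)"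
  have lk: "l < s k" unfolding k_def by (rule LeastI[of _ p]) (use assms in auto)
  have kp: "k \<le> p" unfolding k_def by (rule Least_le) (use assms in auto)
  have k1: "k \<ge> 1" using lk s0 by (cases k) auto
  have "\<not> l < s (k-1)" using k1 not_less_Least[of "k - 1" "\<lambda>k. l < s k"] unfolding k_def by simp
  thus ?thesis using lk kp k1 by (intro exI[of _ k]) auto
qed

lemma blk:
  assumes "l < s p"
  shows "blk l \<in> {1..p}" "s (blk l - 1) \<le> l" "l < s (blk l)"
proof -
  obtain k where k: "k \<in> {1..p} \<and> s (k-1) \<le> l \<and> l < s k" using blk_exists[OF assms] by blast
  have "blk l = k" unfolding blk_def by (rule the_equality) (use k blk_unique in blast)+
  thus "blk l \<in> {1..p}" "s (blk l - 1) \<le> l" "l < s (blk l)" using k by auto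
qed

lemma blk_eqI:
  assumes "k \<in> {1..p}" "s (k-1) \<le> l" "l < s k"
  shows "blk l = k"
proof -
  have "l < s p" using assms s_mono[of k p] by auto
  thus ?thesis using blk[of l] blk_unique assms by blast
qed

lemma blk_shift:
  assumes "k \<in> {1..p}" "x < bsz k"
  shows "blk (s (k-1) + x) = k" "off (s (k-1) + x) = x" "s (k-1) + x < s p"
proof -
  show b: "blk (s (k-1) + x) = k" using assms by (intro blk_eqI) (auto simp: bsz_def)
  show "off (s (k-1) + x) = x" unfolding off_def b by simp
  show "s (k-1) + x < s p" using assms s_mono[of k p] by (auto simp: bsz_def)
qed

lemma off_less:
  assumes "l < s p"
  shows "off l < bsz (blk l)" "s (blk l - 1) + off l = l"
  using blk[OF assms] by (auto simp: off_def bsz_def)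

lemma blk_off_inject:
  assumes "l < s p" "m < s p" "blk l = blk m" "off l = off m"
  shows "l = m"
  using off_less[OF assms(1)] off_less[OF assms(2)] assms by metis

lemma blkdiag_entry:
  assumes "i < s p" "j < s p"
  shows "blkdiag s p Us $$ (i,j) = (if blk i = blk j then Us (blk i) $$ (off i, off j) else 0)"
proof -
  have "(\<exists>k\<in>{1..p}. s (k-1) \<le> i \<and> i < s k \<and> s (k-1) \<le> j \<and> j < s k) \<longleftrightarrow> blk i = blk j"
    using blk[OF assms(1)] blk[OF assms(2)] blk_unique by metis
  thus ?thesis unfolding blkdiag_def index_mat(1)[OF assms] prod.case Let_def blk_def[symmetric]
    by (auto simp: off_def)
qed

lemma sum_blk:
  assumes "k \<in> {1..p}"
  shows "(\<Sum>n<s p. if blk n = k then f n else 0) = (\<Sum>x<bsz k. f (s (k-1) + x))"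
proof -
  have "(\<Sum>n<s p. if blk n = k then f n else 0) = (\<Sum>n\<in>{n. n < s p \<and> blk n = k}. f n)"
    by (simp add: sum.inter_filter[symmetric] Collect_conj_eq lessThan_def Int_commute)
  also have "{n. n < s p \<and> blk n = k} = (\<lambda>x. s (k-1) + x) ` {..<bsz k}"
    using blk_shift[OF assms] off_less by (auto intro!: image_eqI[of _ _ "off _"])
  also have "(\<Sum>n\<in>(\<lambda>x. s (k-1) + x) ` {..<bsz k}. f n) = (\<Sum>x<bsz k. f (s (k-1) + x))"
    by (rule sum.reindex_cong[of "\<lambda>x. s (k-1) + x"]) (auto simp: inj_on_def)
  finally show ?thesis .
qed

lemma sum_blk_off:
  assumes "k \<in> {1..p}"
  shows "(\<Sum>n<s p. if blk n = k then f (off n) else 0) = (\<Sum>x<bsz k. f x)"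
  using sum_blk[OF assms, of "\<lambda>n. f (off n)"] blk_shift[OF assms] by simp

definition block_diagonal :: "real mat \<Rightarrow> bool" where
  "block_diagonal U \<longleftrightarrow> (\<forall>i<s p. \<forall>j<s p. blk i \<noteq> blk j \<longrightarrow> U $$ (i,j) = 0)"

lemma blkdiag_carrier: "blkdiag s p Us \<in> carrier_mat (s p) (s p)"
  by (simp add: blkdiag_def)

lemma block_diagonal_blkdiag: "block_diagonal (blkdiag s p Us)"
  by (simp add: block_diagonal_def blkdiag_entry)

lemma blkdiag_orthogonal:
  assumes Us: "\<And>k. k \<in> {1..p} \<Longrightarrow> Us k \<in> orth_mats (bsz k)"
  shows "transpose_mat (blkdiag s p Us) * blkdiag s p Us = 1\<^sub>m (s p)"
proof (rule eq_matI)
  define U where "U = blkdiag s p Us"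
  have U: "U \<in> carrier_mat (s p) (s p)" by (simp add: U_def blkdiag_def)
  fix i j assume "i < dim_row (1\<^sub>m (s p) :: real mat)" "j < dim_col (1\<^sub>m (s p) :: real mat)"
  hence i: "i < s p" and j: "j < s p" by auto
  have "(transpose_mat U * U) $$ (i,j) = (\<Sum>n<s p. U $$ (n,i) * U $$ (n,j))"
    by (rule index_transpose_mult_sum[OF U U i j])
  also have "\<dots> = (1\<^sub>m (s p) :: real mat) $$ (i,j)"
  proof (cases "blk i = blk j")
    case False
    have "(\<Sum>n<s p. U $$ (n,i) * U $$ (n,j)) = 0"
      using False i j by (intro sum.neutral ballI) (simp add: U_def blkdiag_entry)
    thus ?thesis using False i j by auto
  next
    case True
    define k where "k = blk i"
    have k: "k \<in> {1..p}" using blk[OF i] k_def by simp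
    have Uk: "Us k \<in> carrier_mat (bsz k) (bsz k)" "transpose_mat (Us k) * Us k = 1\<^sub>m (bsz k)"
      using Us[OF k] by (auto simp: orth_mats_def)
    have "(\<Sum>n<s p. U $$ (n,i) * U $$ (n,j))
        = (\<Sum>n<s p. if blk n = k then Us k $$ (off n, off i) * Us k $$ (off n, off j) else 0)"
      using True i j by (intro sum.cong refl) (auto simp: U_def blkdiag_entry k_def)
    also have "\<dots> = (\<Sum>x<bsz k. Us k $$ (x, off i) * Us k $$ (x, off j))"
      by (rule sum_blk_off[OF k])
    also have "\<dots> = (if off i = off j then 1 else 0)"
      using orthonormal_columns[OF Uk] off_less[OF i] off_less[OF j] True k_def by simp
    also have "\<dots> = (1\<^sub>m (s p) :: real mat) $$ (i,j)"
      using blk_off_inject[OF i j True] i j by auto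
    finally show ?thesis .
  qed
  finally show "(transpose_mat (blkdiag s p Us) * blkdiag s p Us) $$ (i,j) = (1\<^sub>m (s p) :: real mat) $$ (i,j)"
    by (simp add: U_def)
qed (simp_all add: blkdiag_def)

definition diag_block :: "real mat \<Rightarrow> nat \<Rightarrow> real mat" where
  "diag_block U k = mat (bsz k) (bsz k) (\<lambda>(x,y). U $$ (s (k-1) + x, s (k-1) + y))"

lemma blkdiag_diag_blocks:
  assumes U: "U \<in> carrier_mat (s p) (s p)" and bd: "block_diagonal U"
  shows "blkdiag s p (diag_block U) = U"
proof (rule eq_matI)
  fix i j assume "i < dim_row U" "j < dim_col U"
  hence i: "i < s p" and j: "j < s p" using U by auto
  show "blkdiag s p (diag_block U) $$ (i,j) = U $$ (i,j)"
    unfolding blkdiag_entry[OF i j] using bd i j off_less[OF i] off_less[OF j]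
    by (auto simp: diag_block_def block_diagonal_def)
qed (use U in \<open>auto simp: blkdiag_def\<close>)

lemma diag_block_orthogonal:
  assumes U: "U \<in> carrier_mat (s p) (s p)" and UU: "transpose_mat U * U = 1\<^sub>m (s p)"
    and bd: "block_diagonal U" and k: "k \<in> {1..p}"
  shows "diag_block U k \<in> orth_mats (bsz k)"
proof -
  have "transpose_mat (diag_block U k) * diag_block U k = 1\<^sub>m (bsz k)"
  proof (rule eq_matI)
    fix x y assume "x < dim_row (1\<^sub>m (bsz k) :: real mat)" "y < dim_col (1\<^sub>m (bsz k) :: real mat)"
    hence x: "x < bsz k" and y: "y < bsz k" by auto
    note sx = blk_shift[OF k x] and sy = blk_shift[OF k y]
    have "(transpose_mat (diag_block U k) * diag_block U k) $$ (x,y)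
        = (\<Sum>z<bsz k. U $$ (s (k-1) + z, s (k-1) + x) * U $$ (s (k-1) + z, s (k-1) + y))"
      using x y by (subst index_transpose_mult_sum[of _ "bsz k" "bsz k"]) (auto simp: diag_block_def)
    also have "\<dots> = (\<Sum>n<s p. if blk n = k then U $$ (n, s (k-1) + x) * U $$ (n, s (k-1) + y) else 0)"
      by (rule sum_blk[OF k, symmetric])
    also have "\<dots> = (\<Sum>n<s p. U $$ (n, s (k-1) + x) * U $$ (n, s (k-1) + y))"
      using sx sy bd by (intro sum.cong refl) (auto simp: block_diagonal_def)
    also have "\<dots> = (1\<^sub>m (bsz k) :: real mat) $$ (x,y)"
      using orthonormal_columns[OF U UU] sx sy x y by simp
    finally show "(transpose_mat (diag_block U k) * diag_block U k) $$ (x,y) = (1\<^sub>m (bsz k) :: real mat) $$ (x,y)" .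
  qed (simp_all add: diag_block_def)
  thus ?thesis by (simp add: orth_mats_def diag_block_def)
qed

lemma blk_orth_iff:
  "U \<in> blk_orth s p \<longleftrightarrow>
     U \<in> carrier_mat (s p) (s p) \<and> transpose_mat U * U = 1\<^sub>m (s p) \<and> block_diagonal U"
proof
  assume "U \<in> blk_orth s p"
  then obtain Us where Us: "\<And>k. k \<in> {1..p} \<Longrightarrow> Us k \<in> orth_mats (bsz k)" and U: "U = blkdiag s p Us"
    unfolding blk_orth_def bsz_def by blast
  show "U \<in> carrier_mat (s p) (s p) \<and> transpose_mat U * U = 1\<^sub>m (s p) \<and> block_diagonal U"
    using blkdiag_orthogonal[OF Us] blkdiag_carrier block_diagonal_blkdiag by (simp add: U)
next
  assume "U \<in> carrier_mat (s p) (s p) \<and> transpose_mat U * U = 1\<^sub>m (s p) \<and> block_diagonal U"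
  hence "U = blkdiag s p (diag_block U)" and "\<forall>k\<in>{1..p}. diag_block U k \<in> orth_mats (s k - s (k-1))"
    using blkdiag_diag_blocks diag_block_orthogonal by (auto simp: bsz_def)
  thus "U \<in> blk_orth s p" unfolding blk_orth_def by blast
qed

lemma diag_blocks_spectral:
  assumes S: "S \<in> carrier_mat (s p) (s p)" and sym: "transpose_mat S = S"
  shows "\<exists>Vs lams. \<forall>k\<in>{1..p}. Vs k \<in> orth_mats (bsz k) \<and>
           diag_block S k = Vs k * mat_diag (bsz k) (lams k) * transpose_mat (Vs k)"
proof -
  have "\<forall>k\<in>{1..p}. \<exists>VL. fst VL \<in> orth_mats (bsz k) \<and>
      diag_block S k = fst VL * mat_diag (bsz k) (snd VL) * transpose_mat (fst VL)"
  proof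
    fix k assume k: "k \<in> {1..p}"
    have "S $$ (a,b) = S $$ (b,a)" if "a < s p" "b < s p" for a b
      using arg_cong[OF sym, of "\<lambda>A. A $$ (b,a)"] S that by simp
    hence "transpose_mat (diag_block S k) = diag_block S k"
      using blk_shift[OF k] by (intro eq_matI) (auto simp: diag_block_def)
    thus "\<exists>VL. fst VL \<in> orth_mats (bsz k) \<and>
        diag_block S k = fst VL * mat_diag (bsz k) (snd VL) * transpose_mat (fst VL)"
      using real_symmetric_spectral[of "diag_block S k" "bsz k"] by (auto simp: diag_block_def orth_mats_def)
  qed
  then obtain VL where "\<forall>k\<in>{1..p}. fst (VL k) \<in> orth_mats (bsz k) \<and>
      diag_block S k = fst (VL k) * mat_diag (bsz k) (snd (VL k)) * transpose_mat (fst (VL k))"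
    by (rule bchoice[THEN exE])
  thus ?thesis by (intro exI[of _ "\<lambda>k. fst (VL k)"] exI[of _ "\<lambda>k. snd (VL k)"])
qed

lemma blkdiag_conj_diag:
  assumes S: "S \<in> carrier_mat (s p) (s p)" and bd: "block_diagonal S"
    and Vs: "\<And>k. k \<in> {1..p} \<Longrightarrow> Vs k \<in> carrier_mat (bsz k) (bsz k)"
    and Sk: "\<And>k. k \<in> {1..p} \<Longrightarrow> diag_block S k = Vs k * mat_diag (bsz k) (lams k) * transpose_mat (Vs k)"
  defines "V \<equiv> blkdiag s p Vs"
  shows "S = V * mat_diag (s p) (\<lambda>l. lams (blk l) (off l)) * transpose_mat V"
proof (rule eq_matI)
  have V: "V \<in> carrier_mat (s p) (s p)" by (simp add: V_def blkdiag_carrier)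
  fix i j assume "i < dim_row (V * mat_diag (s p) (\<lambda>l. lams (blk l) (off l)) * transpose_mat V)"
    "j < dim_col (V * mat_diag (s p) (\<lambda>l. lams (blk l) (off l)) * transpose_mat V)"
  hence i: "i < s p" and j: "j < s p" using V by auto
  have "(V * mat_diag (s p) (\<lambda>l. lams (blk l) (off l)) * transpose_mat V) $$ (i,j)
      = (\<Sum>n<s p. V $$ (i,n) * lams (blk n) (off n) * V $$ (j,n))"
    by (rule index_mat_diag_conj[OF V V i j])
  also have "\<dots> = S $$ (i,j)"
  proof (cases "blk i = blk j")
    case False
    thus ?thesis using bd i j by (auto simp: V_def blkdiag_entry block_diagonal_def intro!: sum.neutral)
  next
    case True
    define k where "k = blk i"
    have k: "k \<in> {1..p}" and ki: "blk i = k" and kj: "blk j = k"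
      using blk(1)[OF i] True by (simp_all add: k_def)
    have "(\<Sum>n<s p. V $$ (i,n) * lams (blk n) (off n) * V $$ (j,n))
        = (\<Sum>n<s p. if blk n = k then Vs k $$ (off i, off n) * lams k (off n) * Vs k $$ (off j, off n) else 0)"
      using i j by (intro sum.cong refl) (auto simp: V_def blkdiag_entry ki kj)
    also have "\<dots> = (Vs k * mat_diag (bsz k) (lams k) * transpose_mat (Vs k)) $$ (off i, off j)"
      using off_less[OF i] off_less[OF j] ki kj
        sum_blk_off[OF k, of "\<lambda>x. Vs k $$ (off i, x) * lams k x * Vs k $$ (off j, x)"]
      by (simp add: index_mat_diag_conj[OF Vs[OF k] Vs[OF k]])
    also have "\<dots> = S $$ (i,j)"
      using Sk[OF k, symmetric] off_less[OF i] off_less[OF j] ki kj by (simp add: diag_block_def)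
    finally show ?thesis .
  qed
  finally show "S $$ (i,j) = (V * mat_diag (s p) (\<lambda>l. lams (blk l) (off l)) * transpose_mat V) $$ (i,j)" by simp
qed (use S in \<open>simp_all add: V_def blkdiag_def\<close>)

lemma block_diagonal_spectral:
  assumes S: "S \<in> carrier_mat (s p) (s p)" and "transpose_mat S = S" and "block_diagonal S"
  shows "\<exists>V lam. V \<in> blk_orth s p \<and> S = V * mat_diag (s p) lam * transpose_mat V"
proof -
  obtain Vs lams where Vs: "\<And>k. k \<in> {1..p} \<Longrightarrow> Vs k \<in> orth_mats (bsz k)"
    and Sk: "\<And>k. k \<in> {1..p} \<Longrightarrow> diag_block S k = Vs k * mat_diag (bsz k) (lams k) * transpose_mat (Vs k)"
    using diag_blocks_spectral[OF assms(1,2)] by blast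
  have "blkdiag s p Vs \<in> blk_orth s p" using Vs unfolding blk_orth_def bsz_def by blast
  moreover have "Vs k \<in> carrier_mat (bsz k) (bsz k)" if "k \<in> {1..p}" for k
    using Vs[OF that] by (simp add: orth_mats_def)
  ultimately show ?thesis using blkdiag_conj_diag[OF S assms(3) _ Sk] by blast
qed

end

section \<open>The residual and the defects of the upper-left block\<close>

locale residual_setting = block_partition s p for s :: "nat \<Rightarrow> nat" and p :: nat +
  fixes d K r :: nat and a q :: "nat \<Rightarrow> real" and Q :: "real mat"
  assumes rK: "r \<le> K" and Kd: "K \<le> d"
    and a_mono: "\<And>i. 1 \<le> i \<Longrightarrow> i < r \<Longrightarrow> a i \<ge> a (i+1)"
    and a_pos: "a r > 0"
    and sp: "s p = r"
    and a_blocks: "\<And>i k. i \<in> {1..p} \<Longrightarrow> s (i-1) < k \<Longrightarrow> k \<le> s i \<Longrightarrow> a k = a (s i)"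
    and a_strict: "\<And>i. 1 \<le> i \<Longrightarrow> i < p \<Longrightarrow> a (s i) > a (s (i+1))"
    and q_sign: "\<And>i. i \<in> {1..r} \<Longrightarrow> q i = 1 \<or> q i = -1"
    and Q_st: "Q \<in> stiefel d K"
begin

text \<open>The diagonal of \<open>A\<close>, indexed from \<open>0\<close> like the matrix entries.\<close>
definition \<alpha> :: "nat \<Rightarrow> real" where "\<alpha> l = a (Suc l)"

lemma Q_carrier: "Q \<in> carrier_mat d K"
  using Q_st by (simp add: stiefel_def)

lemma Q_columns: "l < K \<Longrightarrow> m < K \<Longrightarrow> (\<Sum>i<d. Q $$ (i,l) * Q $$ (i,m)) = (if l = m then 1 else 0)"
  using orthonormal_columns[OF Q_carrier] Q_st by (simp add: stiefel_def)

lemma blk_orthD: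
  assumes "U \<in> blk_orth s p"
  shows "U \<in> carrier_mat r r" "transpose_mat U * U = 1\<^sub>m r"
    "\<And>i j. i < r \<Longrightarrow> j < r \<Longrightarrow> blk i \<noteq> blk j \<Longrightarrow> U $$ (i,j) = 0"
  using assms unfolding blk_orth_iff block_diagonal_def sp by auto

lemma blk_orth_conj_carrier: "U \<in> blk_orth s p \<Longrightarrow> U * diag_vec r c * transpose_mat U \<in> carrier_mat r r"
  using blk_orthD(1) by (intro mult_carrier_mat[of _ r r _ r]) (auto simp: diag_vec_def)

lemma a_ge_a_r: "1 \<le> i \<Longrightarrow> i \<le> r \<Longrightarrow> a i \<ge> a r"
proof (induction "r - i" arbitrary: i)
  case (Suc x)
  hence "a (i+1) \<ge> a r" by (intro Suc.hyps) auto
  moreover have "a i \<ge> a (i+1)" using Suc by (intro a_mono) auto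
  ultimately show ?case by linarith
qed simp

lemma \<alpha>_ge: "l < r \<Longrightarrow> \<alpha> l \<ge> a r"
  unfolding \<alpha>_def using a_ge_a_r[of "Suc l"] by simp

lemma \<alpha>_pos: "l < r \<Longrightarrow> \<alpha> l > 0"
  using \<alpha>_ge a_pos by fastforce

lemma \<alpha>_blk: "l < r \<Longrightarrow> \<alpha> l = a (s (blk l))"
  unfolding \<alpha>_def using blk[of l] sp by (intro a_blocks) auto

lemma a_s_ge: "i \<in> {1..p} \<Longrightarrow> a (s i) \<ge> a r"
  using s_strict_mono[of 0 i] s_mono[of i p] s0 sp by (intro a_ge_a_r) auto

lemma a_s_strict: "1 \<le> i \<Longrightarrow> i < j \<Longrightarrow> j \<le> p \<Longrightarrow> a (s i) > a (s j)"
proof (induction j)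
  case (Suc j)
  thus ?case using a_strict[of j] by (cases "i = j") force+
qed simp

definition tail :: "nat \<Rightarrow> real" where "tail l = (\<Sum>i\<in>{r..<d}. (Q $$ (i,l))\<^sup>2)"

lemma tail_nonneg: "tail l \<ge> 0"
  unfolding tail_def by (intro sum_nonneg) auto

lemma column_head: "l < r \<Longrightarrow> (\<Sum>i<r. (Q $$ (i,l))\<^sup>2) = 1 - tail l"
proof -
  assume l: "l < r"
  have "(\<Sum>i<d. (Q $$ (i,l))\<^sup>2) = 1" using Q_columns[of l l] l rK by (simp add: power2_eq_square)
  moreover have "(\<Sum>i<d. (Q $$ (i,l))\<^sup>2) = (\<Sum>i<r. (Q $$ (i,l))\<^sup>2) + tail l"
    unfolding tail_def using sum.atLeastLessThan_concat[of 0 r d "\<lambda>i. (Q $$ (i,l))\<^sup>2"] rK Kd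
    by (simp add: lessThan_atLeast0)
  ultimately show ?thesis by simp
qed

definition gap_term where "gap_term = (\<Sum>l<r. \<Sum>m<r. (Q $$ (l,m))\<^sup>2 * (\<alpha> l - \<alpha> m)\<^sup>2)"

definition skew_term where "skew_term = (\<Sum>l<r. \<Sum>m<r. \<alpha> l * \<alpha> m * (Q $$ (l,m) - Q $$ (m,l))\<^sup>2)"

definition tail_term where "tail_term = (\<Sum>l<r. (\<alpha> l)\<^sup>2 * tail l)"

lemma terms_nonneg: "gap_term \<ge> 0" "skew_term \<ge> 0" "tail_term \<ge> 0"
  unfolding gap_term_def skew_term_def tail_term_def using \<alpha>_pos
  by (auto intro!: sum_nonneg mult_nonneg_nonneg tail_nonneg simp: less_imp_le)

lemma A_entry: "i < d \<Longrightarrow> j < K \<Longrightarrow> A_mat d K r a $$ (i,j) = (if i = j \<and> i < r then \<alpha> i else 0)"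
  by (simp add: A_mat_def \<alpha>_def)

lemma sum_A_diag:
  "(\<Sum>i<d. \<Sum>j<K. A_mat d K r a $$ (i,j) * f i j) = (\<Sum>l<r. \<alpha> l * f l l)"
proof -
  have "(\<Sum>i<d. \<Sum>j<K. A_mat d K r a $$ (i,j) * f i j) = (\<Sum>i<d. if i < r then \<alpha> i * f i i else 0)"
    using rK Kd by (intro sum.cong refl) (auto simp: A_entry if_distrib[of "\<lambda>x. x * _"] sum.delta' cong: if_cong)
  also have "\<dots> = (\<Sum>l<r. \<alpha> l * f l l)"
    using rK Kd by (simp add: sum.inter_filter[symmetric]) (intro sum.cong, auto)
  finally show ?thesis .
qed

lemma index_QAQ:
  assumes i: "i < d" and j: "j < K"
  shows "(Q * transpose_mat (A_mat d K r a) * Q) $$ (i,j) = (\<Sum>l<r. Q $$ (i,l) * \<alpha> l * Q $$ (l,j))"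
proof -
  have A: "A_mat d K r a \<in> carrier_mat d K" by (simp add: A_mat_def)
  have QA: "(Q * transpose_mat (A_mat d K r a)) $$ (i,k) = (if k < r then Q $$ (i,k) * \<alpha> k else 0)"
    if k: "k < d" for k
  proof -
    have "(Q * transpose_mat (A_mat d K r a)) $$ (i,k) = (\<Sum>t<K. Q $$ (i,t) * A_mat d K r a $$ (k,t))"
      using index_mult_mat_sum[of Q d K "transpose_mat (A_mat d K r a)" d i k] Q_carrier A i k by simp
    also have "\<dots> = (\<Sum>t<K. if t = k then (if k < r then Q $$ (i,k) * \<alpha> k else 0) else 0)"
      using k by (intro sum.cong refl) (auto simp: A_entry)
    finally show ?thesis using k rK by (auto simp: sum.delta')
  qed
  have "(Q * transpose_mat (A_mat d K r a) * Q) $$ (i,j)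
      = (\<Sum>k<d. (Q * transpose_mat (A_mat d K r a)) $$ (i,k) * Q $$ (k,j))"
    using index_mult_mat_sum[of "Q * transpose_mat (A_mat d K r a)" d d Q K i j] Q_carrier A i j by simp
  also have "\<dots> = (\<Sum>k<d. if k < r then Q $$ (i,k) * \<alpha> k * Q $$ (k,j) else 0)"
    by (intro sum.cong refl) (simp add: QA)
  also have "\<dots> = (\<Sum>k<r. Q $$ (i,k) * \<alpha> k * Q $$ (k,j))"
    using rK Kd by (simp add: sum.inter_filter[symmetric]) (intro sum.cong, auto)
  finally show ?thesis .
qed

lemma fro_norm_residual_sq:
  "(fro_norm (R_res (A_mat d K r a) Q))\<^sup>2 = (\<Sum>l<r. (\<alpha> l)\<^sup>2)
     - 2 * (\<Sum>l<r. \<Sum>m<r. \<alpha> l * \<alpha> m * (Q $$ (l,m) * Q $$ (m,l)))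
     + (\<Sum>l<r. (\<alpha> l)\<^sup>2 * (\<Sum>j<K. (Q $$ (l,j))\<^sup>2))"
proof -
  define A where "A = A_mat d K r a"
  define P where "P i j = (\<Sum>l<r. Q $$ (i,l) * \<alpha> l * Q $$ (l,j))" for i j
  have A: "A \<in> carrier_mat d K" by (simp add: A_def A_mat_def)
  have "Q * transpose_mat A * Q \<in> carrier_mat d K" using Q_carrier A by simp
  hence "(fro_norm (R_res A Q))\<^sup>2 = (\<Sum>i<d. \<Sum>j<K. (A $$ (i,j) - P i j)\<^sup>2)"
    unfolding R_res_def using fro_norm_diff_sq[OF A] by (simp add: A_def index_QAQ P_def)
  also have "\<dots> = (\<Sum>i<d. \<Sum>j<K. (A $$ (i,j))\<^sup>2) - 2 * (\<Sum>i<d. \<Sum>j<K. A $$ (i,j) * P i j)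
      + (\<Sum>i<d. \<Sum>j<K. (P i j)\<^sup>2)"
    by (simp add: power2_diff sum.distrib sum_subtractf sum_distrib_left mult.assoc)
  also have "(\<Sum>i<d. \<Sum>j<K. (A $$ (i,j))\<^sup>2) = (\<Sum>l<r. (\<alpha> l)\<^sup>2)"
    unfolding power2_eq_square A_def sum_A_diag using rK Kd by (intro sum.cong refl) (simp add: A_entry)
  also have "(\<Sum>i<d. \<Sum>j<K. A $$ (i,j) * P i j) = (\<Sum>l<r. \<Sum>m<r. \<alpha> l * \<alpha> m * (Q $$ (l,m) * Q $$ (m,l)))"
    unfolding A_def sum_A_diag P_def by (intro sum.cong refl) (simp add: sum_distrib_left mult_ac)
  also have "(\<Sum>i<d. \<Sum>j<K. (P i j)\<^sup>2) = (\<Sum>l<r. (\<alpha> l)\<^sup>2 * (\<Sum>j<K. (Q $$ (l,j))\<^sup>2))"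
    unfolding P_def
    by (rule sum_squares_orthonormal_combination[where X="\<lambda>i l. Q $$ (i,l)" and Z="\<lambda>j l. Q $$ (l,j)"])
       (use Q_columns rK in auto)
  finally show ?thesis by (simp add: A_def)
qed

lemma residual_terms_sum:
  "gap_term + skew_term + tail_term = (\<Sum>l<r. (\<alpha> l)\<^sup>2 * (\<Sum>m<r. (Q $$ (l,m))\<^sup>2)) + (\<Sum>l<r. (\<alpha> l)\<^sup>2)
     - 2 * (\<Sum>l<r. \<Sum>m<r. \<alpha> l * \<alpha> m * (Q $$ (l,m) * Q $$ (m,l)))"
proof -
  define Z where "Z = (\<Sum>l<r. \<Sum>m<r. \<alpha> l * \<alpha> m * (Q $$ (l,m))\<^sup>2)"
  have "(\<Sum>l<r. \<Sum>m<r. \<alpha> l * \<alpha> m * (Q $$ (m,l))\<^sup>2) = Z"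
    unfolding Z_def by (subst sum.swap) (simp add: mult.commute)
  hence skew: "skew_term = 2 * Z - 2 * (\<Sum>l<r. \<Sum>m<r. \<alpha> l * \<alpha> m * (Q $$ (l,m) * Q $$ (m,l)))"
    unfolding skew_term_def Z_def
    by (simp add: power2_diff algebra_simps sum.distrib sum_subtractf sum_distrib_left)
  have "(\<Sum>l<r. \<Sum>m<r. (Q $$ (l,m))\<^sup>2 * (\<alpha> m)\<^sup>2) = (\<Sum>m<r. (\<alpha> m)\<^sup>2 * (1 - tail m))"
    by (subst sum.swap) (intro sum.cong refl, simp add: column_head sum_distrib_right[symmetric])
  hence "gap_term = (\<Sum>l<r. (\<alpha> l)\<^sup>2 * (\<Sum>m<r. (Q $$ (l,m))\<^sup>2)) + (\<Sum>m<r. (\<alpha> m)\<^sup>2 * (1 - tail m)) - 2 * Z"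
    unfolding gap_term_def Z_def
    by (simp add: power2_diff algebra_simps sum.distrib sum_subtractf sum_distrib_left)
  thus ?thesis using skew unfolding tail_term_def by (simp add: algebra_simps sum_subtractf)
qed

lemma residual_lower_bound: "gap_term + skew_term + tail_term \<le> (fro_norm (R_res (A_mat d K r a) Q))\<^sup>2"
proof -
  have "(\<Sum>m<r. (Q $$ (l,m))\<^sup>2) \<le> (\<Sum>j<K. (Q $$ (l,j))\<^sup>2)" for l
    using rK by (intro sum_mono2) auto
  hence "(\<Sum>l<r. (\<alpha> l)\<^sup>2 * (\<Sum>m<r. (Q $$ (l,m))\<^sup>2)) \<le> (\<Sum>l<r. (\<alpha> l)\<^sup>2 * (\<Sum>j<K. (Q $$ (l,j))\<^sup>2))"
    by (intro sum_mono mult_left_mono) auto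
  thus ?thesis unfolding residual_terms_sum fro_norm_residual_sq by linarith
qed

lemma delta_sq_pos: "i \<in> {1..p} \<Longrightarrow> j \<in> {1..p} \<Longrightarrow> i \<noteq> j \<Longrightarrow> (delta a s i j)\<^sup>2 > 0"
proof -
  assume ij: "i \<in> {1..p}" "j \<in> {1..p}" "i \<noteq> j"
  have pos: "a (s i) > 0" "a (s j) > 0" using a_s_ge[OF ij(1)] a_s_ge[OF ij(2)] a_pos by auto
  have "a (s i) \<noteq> a (s j)" using ij a_s_strict[of i j] a_s_strict[of j i] by (cases "i < j") auto
  hence "(a (s i))\<^sup>2 \<noteq> (a (s j))\<^sup>2" using pos by (simp add: power2_eq_iff_nonneg)
  hence "a (s i) * a (s i) \<noteq> a (s j) * a (s j)" by (simp add: power2_eq_square)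
  hence "delta a s i j \<noteq> 0" using pos unfolding delta_def by (simp add: field_simps)
  thus ?thesis by simp
qed

lemma inv_min_delta_sq_mult_ge:
  assumes "i \<in> {1..p}" "j \<in> {1..p}" "i \<noteq> j"
  shows "1 \<le> inv_min_delta_sq a s p * (delta a s i j)\<^sup>2"
proof -
  define D where "D = {(delta a s i j)\<^sup>2 | i j. i \<in> {1..p} \<and> j \<in> {1..p} \<and> i \<noteq> j}"
  have "D \<subseteq> (\<lambda>(i,j). (delta a s i j)\<^sup>2) ` ({1..p} \<times> {1..p})" unfolding D_def by auto
  hence fin: "finite D" by (rule finite_subset) auto
  have mem: "(delta a s i j)\<^sup>2 \<in> D" using assms unfolding D_def by blast
  have "\<forall>x\<in>D. x > 0" using delta_sq_pos unfolding D_def by blast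
  hence "Min D > 0" using fin mem by (subst Min_gr_iff) auto
  moreover have "Min D \<le> (delta a s i j)\<^sup>2" using fin mem by simp
  moreover have "p > 1" using assms by auto
  ultimately show ?thesis unfolding inv_min_delta_sq_def D_def[symmetric] by simp
qed

lemma inv_min_delta_sq_nonneg: "inv_min_delta_sq a s p \<ge> 0"
proof (cases "p \<le> 1")
  case False
  hence ge: "1 \<le> inv_min_delta_sq a s p * (delta a s 1 2)\<^sup>2" by (intro inv_min_delta_sq_mult_ge) auto
  show ?thesis
  proof (rule ccontr)
    assume "\<not> inv_min_delta_sq a s p \<ge> 0"
    hence "inv_min_delta_sq a s p * (delta a s 1 2)\<^sup>2 \<le> 0" by (intro mult_nonpos_nonneg) auto
    thus False using ge by linarith
  qed
qed (simp add: inv_min_delta_sq_def)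

definition off_mass where
  "off_mass = (\<Sum>l<r. \<Sum>m<r. if blk l = blk m then 0 else (Q $$ (l,m))\<^sup>2)"

definition skew_mass where
  "skew_mass = (\<Sum>l<r. \<Sum>m<r. if blk l = blk m then ((Q $$ (l,m) - Q $$ (m,l)) / 2)\<^sup>2 else 0)"

definition tail_mass where
  "tail_mass = (\<Sum>l<r. tail l)"

lemma tail_mass_bound: "(a r)\<^sup>2 * tail_mass \<le> tail_term"
  unfolding tail_mass_def tail_term_def sum_distrib_left
  using \<alpha>_ge a_pos by (intro sum_mono mult_right_mono tail_nonneg power_mono) auto

lemma skew_mass_bound: "4 * (a r)\<^sup>2 * skew_mass \<le> skew_term"
  unfolding skew_mass_def skew_term_def sum_distrib_left
proof (intro sum_mono)
  fix l m assume "l \<in> {..<r}" "m \<in> {..<r}"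
  hence "a r * a r \<le> \<alpha> l * \<alpha> m" using \<alpha>_ge \<alpha>_pos a_pos by (intro mult_mono) (auto simp: less_imp_le)
  hence "(a r)\<^sup>2 * (Q $$ (l,m) - Q $$ (m,l))\<^sup>2 \<le> \<alpha> l * \<alpha> m * (Q $$ (l,m) - Q $$ (m,l))\<^sup>2"
    by (intro mult_right_mono) (auto simp: power2_eq_square)
  moreover have "0 \<le> \<alpha> l * \<alpha> m * (Q $$ (l,m) - Q $$ (m,l))\<^sup>2"
    using \<alpha>_pos \<open>l \<in> {..<r}\<close> \<open>m \<in> {..<r}\<close> by (simp add: less_imp_le)
  ultimately show "4 * (a r)\<^sup>2 * (if blk l = blk m then ((Q $$ (l,m) - Q $$ (m,l)) / 2)\<^sup>2 else 0)
      \<le> \<alpha> l * \<alpha> m * (Q $$ (l,m) - Q $$ (m,l))\<^sup>2"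
    by (auto simp: power_divide)
qed

lemma off_mass_bound: "(a r)\<^sup>2 * off_mass \<le> 4 * inv_min_delta_sq a s p * gap_term"
  unfolding off_mass_def gap_term_def sum_distrib_left
proof (intro sum_mono)
  fix l m assume l: "l \<in> {..<r}" and m: "m \<in> {..<r}"
  show "(a r)\<^sup>2 * (if blk l = blk m then 0 else (Q $$ (l,m))\<^sup>2)
      \<le> 4 * inv_min_delta_sq a s p * ((Q $$ (l,m))\<^sup>2 * (\<alpha> l - \<alpha> m)\<^sup>2)"
  proof (cases "blk l = blk m")
    case True
    thus ?thesis using inv_min_delta_sq_nonneg by simp
  next
    case False
    have bl: "blk l \<in> {1..p}" and bm: "blk m \<in> {1..p}" using blk(1)[of l] blk(1)[of m] l m sp by auto
    have "(a r)\<^sup>2 \<le> inv_min_delta_sq a s p * ((a r)\<^sup>2 * (delta a s (blk l) (blk m))\<^sup>2)"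
      using mult_left_mono[OF inv_min_delta_sq_mult_ge[OF bl bm False], of "(a r)\<^sup>2"] by (simp add: mult_ac)
    also have "\<dots> \<le> inv_min_delta_sq a s p * (4 * (\<alpha> l - \<alpha> m)\<^sup>2)"
      unfolding delta_def \<alpha>_blk[of l, OF l[simplified]] \<alpha>_blk[of m, OF m[simplified]]
      using inv_min_delta_sq_nonneg a_pos a_s_ge[OF bl] a_s_ge[OF bm]
      by (intro mult_left_mono ratio_gap_sq_le) auto
    finally have "(a r)\<^sup>2 \<le> inv_min_delta_sq a s p * (4 * (\<alpha> l - \<alpha> m)\<^sup>2)" .
    from mult_right_mono[OF this, of "(Q $$ (l,m))\<^sup>2"]
    show ?thesis using False by (simp add: mult_ac)
  qed
qed

lemma defect_bound:
  "2 * off_mass + 2 * skew_mass + tail_mass \<le> 1 / (a r)\<^sup>2 * (10 + 6 * (6 * real p - 5) * inv_min_delta_sq a s p)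
     * (fro_norm (R_res (A_mat d K r a) Q))\<^sup>2"
proof -
  define c where "c = inv_min_delta_sq a s p"
  define R where "R = (fro_norm (R_res (A_mat d K r a) Q))\<^sup>2"
  have c: "c \<ge> 0" using inv_min_delta_sq_nonneg by (simp add: c_def)
  have "(a r)\<^sup>2 * (2 * off_mass + 2 * skew_mass + tail_mass) \<le> 8 * c * gap_term + skew_term / 2 + tail_term"
    using off_mass_bound skew_mass_bound tail_mass_bound unfolding c_def by (simp add: algebra_simps)
  also have "\<dots> \<le> (1 + 8 * c) * (gap_term + skew_term + tail_term)"
    using terms_nonneg c by (simp add: algebra_simps)
  also have "\<dots> \<le> (1 + 8 * c) * R"
    using residual_lower_bound c unfolding R_def by (intro mult_left_mono) auto
  also have "\<dots> \<le> (10 + 6 * (6 * real p - 5) * c) * R"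
  proof (intro mult_right_mono)
    show "1 + 8 * c \<le> 10 + 6 * (6 * real p - 5) * c"
    proof (cases "p \<le> 1")
      case False
      hence "8 * c \<le> 6 * (6 * real p - 5) * c" using c by (intro mult_right_mono) auto
      thus ?thesis by simp
    qed (simp add: c_def inv_min_delta_sq_def)
  qed (simp add: R_def)
  finally show ?thesis using a_pos unfolding c_def R_def by (simp add: field_simps)
qed

definition sym_part :: "real mat" where
  "sym_part = mat r r (\<lambda>(l,m). if blk l = blk m then (Q $$ (l,m) + Q $$ (m,l)) / 2 else 0)"

lemma sym_part_spectral: "\<exists>V lam. V \<in> blk_orth s p \<and> sym_part = V * mat_diag r lam * transpose_mat V"
proof -
  have "transpose_mat sym_part = sym_part" by (intro eq_matI) (auto simp: sym_part_def)
  moreover have "block_diagonal sym_part" by (simp add: block_diagonal_def sym_part_def sp)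
  ultimately show ?thesis using block_diagonal_spectral[of sym_part] by (simp add: sym_part_def sp)
qed

lemma sum_sq_upper_left: "(\<Sum>l<r. \<Sum>m<r. (Q $$ (l,m))\<^sup>2) = r - tail_mass"
proof -
  have "(\<Sum>l<r. \<Sum>m<r. (Q $$ (l,m))\<^sup>2) = (\<Sum>m<r. 1 - tail m)"
    by (subst sum.swap) (simp add: column_head)
  thus ?thesis by (simp add: tail_mass_def sum_subtractf)
qed

lemma sum_sq_sym_part: "(\<Sum>l<r. \<Sum>m<r. (sym_part $$ (l,m))\<^sup>2) = r - tail_mass - off_mass - skew_mass"
proof -
  have "r - tail_mass = (\<Sum>l<r. \<Sum>m<r. if blk l = blk m then (Q $$ (l,m) - 0)\<^sup>2 else 0) + off_mass"
    unfolding sum_sq_upper_left[symmetric] off_mass_def sum.distrib[symmetric]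
    by (intro sum.cong refl) auto
  also have "(\<Sum>l<r. \<Sum>m<r. if blk l = blk m then (Q $$ (l,m) - 0)\<^sup>2 else 0)
      = (\<Sum>l<r. \<Sum>m<r. if blk l = blk m then ((Q $$ (l,m) + Q $$ (m,l)) / 2 - 0)\<^sup>2
                                + ((Q $$ (l,m) - Q $$ (m,l)) / 2)\<^sup>2 else 0)"
    by (rule sum_sq_sym_skew_split) auto
  also have "\<dots> = (\<Sum>l<r. \<Sum>m<r. (sym_part $$ (l,m))\<^sup>2) + skew_mass"
    unfolding skew_mass_def sum.distrib[symmetric] by (intro sum.cong refl) (auto simp: sym_part_def)
  finally show ?thesis by simp
qed

end

section \<open>Rounding the upper-left block\<close>

locale spectral_setting = residual_setting +
  fixes V :: "real mat" and lam :: "nat \<Rightarrow> real"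
  assumes V_blk_orth: "V \<in> blk_orth s p"
    and sym_part_eq: "sym_part = V * mat_diag r lam * transpose_mat V"
begin

lemmas V_carrier = blk_orthD(1)[OF V_blk_orth]
  and V_orth = blk_orthD(2)[OF V_blk_orth]
  and V_block = blk_orthD(3)[OF V_blk_orth]

lemma V_columns: "k < r \<Longrightarrow> k' < r \<Longrightarrow> (\<Sum>i<r. V $$ (i,k) * V $$ (i,k')) = (if k = k' then 1 else 0)"
  by (rule orthonormal_columns[OF V_carrier V_orth])

lemma V_column_sq: "k < r \<Longrightarrow> (\<Sum>i<r. (V $$ (i,k))\<^sup>2) = 1"
  using V_columns[of k k] by (simp add: power2_eq_square)

definition eig_sign :: "nat \<Rightarrow> real" where "eig_sign k = (if lam k \<ge> 0 then 1 else -1)"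

lemma eig_sign_cases: "eig_sign k = 1 \<or> eig_sign k = -1"
  by (simp add: eig_sign_def)

definition W :: "real mat" where "W = V * mat_diag r eig_sign * transpose_mat V"

lemma W_carrier: "W \<in> carrier_mat r r"
  unfolding W_def using V_carrier by (intro mult_carrier_mat[of _ r r _ r]) auto

lemma index_W: "l < r \<Longrightarrow> m < r \<Longrightarrow> W $$ (l,m) = (\<Sum>k<r. V $$ (l,k) * eig_sign k * V $$ (m,k))"
  unfolding W_def by (rule index_mat_diag_conj[OF V_carrier V_carrier])

lemma index_sym_part: "l < r \<Longrightarrow> m < r \<Longrightarrow> sym_part $$ (l,m) = (\<Sum>k<r. V $$ (l,k) * lam k * V $$ (m,k))"
  unfolding sym_part_eq by (rule index_mat_diag_conj[OF V_carrier V_carrier])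

lemma W_sym: "l < r \<Longrightarrow> m < r \<Longrightarrow> W $$ (l,m) = W $$ (m,l)"
  by (simp add: index_W mult.commute mult.left_commute)

lemma V_col_product_zero: "l < r \<Longrightarrow> m < r \<Longrightarrow> k < r \<Longrightarrow> blk l \<noteq> blk m \<Longrightarrow> V $$ (l,k) * V $$ (m,k) = 0"
  using V_block[of l k] V_block[of m k] by (cases "blk l = blk k") auto

lemma W_block: "l < r \<Longrightarrow> m < r \<Longrightarrow> blk l \<noteq> blk m \<Longrightarrow> W $$ (l,m) = 0"
  unfolding index_W using V_col_product_zero
  by (intro sum.neutral ballI) (metis lessThan_iff mult.commute mult_zero_left mult.assoc)

lemma sum_sq_sym_part_eig: "(\<Sum>l<r. \<Sum>m<r. (sym_part $$ (l,m))\<^sup>2) = (\<Sum>k<r. (lam k)\<^sup>2)"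
proof -
  have "(\<Sum>l<r. \<Sum>m<r. (sym_part $$ (l,m))\<^sup>2) = (\<Sum>l<r. \<Sum>m<r. (\<Sum>k<r. V $$ (l,k) * lam k * V $$ (m,k))\<^sup>2)"
    by (intro sum.cong refl) (simp add: index_sym_part)
  also have "\<dots> = (\<Sum>k<r. (lam k)\<^sup>2)" by (rule sum_sq_orthogonal_conj[OF V_carrier V_orth])
  finally show ?thesis .
qed

lemma sum_sq_sym_part_minus_W:
  "(\<Sum>l<r. \<Sum>m<r. (sym_part $$ (l,m) - W $$ (l,m))\<^sup>2) = (\<Sum>k<r. (lam k - eig_sign k)\<^sup>2)"
proof -
  have "(\<Sum>l<r. \<Sum>m<r. (sym_part $$ (l,m) - W $$ (l,m))\<^sup>2)
      = (\<Sum>l<r. \<Sum>m<r. (\<Sum>k<r. V $$ (l,k) * (lam k - eig_sign k) * V $$ (m,k))\<^sup>2)"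
    by (intro sum.cong refl)
       (simp add: index_sym_part index_W sum_subtractf[symmetric] right_diff_distrib left_diff_distrib)
  also have "\<dots> = (\<Sum>k<r. (lam k - eig_sign k)\<^sup>2)"
    by (rule sum_sq_orthogonal_conj[OF V_carrier V_orth])
  finally show ?thesis .
qed

text \<open>Since \<open>V\<close> is block diagonal, the quadratic form of \<open>sym_part\<close> at a column of \<open>V\<close> is
  that of the upper-left block of \<open>Q\<close>.\<close>
lemma eigenvalue_quadratic_form:
  assumes k: "k < r"
  shows "lam k = (\<Sum>a<r. V $$ (a,k) * (\<Sum>b<r. Q $$ (a,b) * V $$ (b,k)))"
proof -
  have "(\<Sum>a<r. \<Sum>b<r. V $$ (a,k) * V $$ (b,k) * sym_part $$ (a,b))
      = (\<Sum>a<r. \<Sum>b<r. \<Sum>j<r. (V $$ (a,k) * V $$ (a,j)) * (lam j * (V $$ (b,j) * V $$ (b,k))))"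
    by (simp add: index_sym_part sum_distrib_left mult_ac)
  also have "\<dots> = (\<Sum>a<r. \<Sum>j<r. \<Sum>b<r. (V $$ (a,k) * V $$ (a,j)) * (lam j * (V $$ (b,j) * V $$ (b,k))))"
    by (rule sum.cong[OF refl], rule sum.swap)
  also have "\<dots> = (\<Sum>j<r. \<Sum>a<r. \<Sum>b<r. (V $$ (a,k) * V $$ (a,j)) * (lam j * (V $$ (b,j) * V $$ (b,k))))"
    by (rule sum.swap)
  also have "\<dots> = (\<Sum>j<r. lam j * ((\<Sum>a<r. V $$ (a,k) * V $$ (a,j)) * (\<Sum>b<r. V $$ (b,j) * V $$ (b,k))))"
    unfolding sum_product by (simp add: sum_distrib_left mult_ac)
  also have "\<dots> = lam k"
    using k by (simp add: V_columns sum.delta if_distrib[of "\<lambda>x. _ * x"] cong: if_cong)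
  finally have "lam k = (\<Sum>a<r. \<Sum>b<r. V $$ (a,k) * V $$ (b,k) * sym_part $$ (a,b))" ..
  also have "\<dots> = (\<Sum>a<r. \<Sum>b<r. V $$ (a,k) * V $$ (b,k) * ((Q $$ (a,b) + Q $$ (b,a)) / 2))"
    using V_col_product_zero k by (intro sum.cong refl) (auto simp: sym_part_def)
  also have "\<dots> = (\<Sum>a<r. \<Sum>b<r. V $$ (a,k) * V $$ (b,k) * Q $$ (a,b))"
  proof -
    have "(\<Sum>a<r. \<Sum>b<r. V $$ (a,k) * V $$ (b,k) * Q $$ (b,a)) = (\<Sum>a<r. \<Sum>b<r. V $$ (a,k) * V $$ (b,k) * Q $$ (a,b))"
      by (subst sum.swap) (simp add: mult_ac)
    thus ?thesis by (simp add: add_divide_distrib sum.distrib sum_divide_distrib[symmetric] distrib_left)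
  qed
  finally show ?thesis by (simp add: sum_distrib_left mult_ac)
qed

lemma eigenvalue_abs_le_1: "k < r \<Longrightarrow> \<bar>lam k\<bar> \<le> 1"
proof -
  assume k: "k < r"
  define u where "u a = (\<Sum>b<r. Q $$ (a,b) * V $$ (b,k))" for a
  have "(\<Sum>a<r. (u a)\<^sup>2) \<le> (\<Sum>a<d. (u a)\<^sup>2)" using rK Kd by (intro sum_mono2) auto
  also have "\<dots> = (\<Sum>a<d. \<Sum>j\<in>{0::nat}. (\<Sum>b<r. Q $$ (a,b) * V $$ (b,k) * 1)\<^sup>2)" by (simp add: u_def)
  also have "\<dots> = 1"
    using sum_squares_orthonormal_combination[where X="\<lambda>a b. Q $$ (a,b)" and Z="\<lambda>_ _. 1"
      and I="{..<d}" and J="{0::nat}" and n=r and c="\<lambda>b. V $$ (b,k)"]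
      Q_columns rK V_column_sq[OF k] by simp
  finally have "(\<Sum>a<r. (u a)\<^sup>2) \<le> 1" .
  thus ?thesis
    using abs_sum_mult_le[of "\<lambda>a. V $$ (a,k)" u "{..<r}"] V_column_sq[OF k]
    unfolding eigenvalue_quadratic_form[OF k] u_def[symmetric] by simp
qed

lemma fro_norm_upper_left_minus_W:
  "(fro_norm (upper_left r Q - W))\<^sup>2 \<le> 2 * off_mass + 2 * skew_mass + tail_mass"
proof -
  have B: "upper_left r Q \<in> carrier_mat r r" by (simp add: upper_left_def)
  have "(fro_norm (upper_left r Q - W))\<^sup>2 = (\<Sum>l<r. \<Sum>m<r. (Q $$ (l,m) - W $$ (l,m))\<^sup>2)"
    using fro_norm_diff_sq[OF B W_carrier] by (simp add: upper_left_def)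
  also have "\<dots> = (\<Sum>l<r. \<Sum>m<r. if blk l = blk m then (Q $$ (l,m) - W $$ (l,m))\<^sup>2 else 0) + off_mass"
    unfolding off_mass_def sum.distrib[symmetric] by (intro sum.cong refl) (auto simp: W_block)
  also have "(\<Sum>l<r. \<Sum>m<r. if blk l = blk m then (Q $$ (l,m) - W $$ (l,m))\<^sup>2 else 0)
      = (\<Sum>l<r. \<Sum>m<r. if blk l = blk m then ((Q $$ (l,m) + Q $$ (m,l)) / 2 - W $$ (l,m))\<^sup>2
                                + ((Q $$ (l,m) - Q $$ (m,l)) / 2)\<^sup>2 else 0)"
    by (rule sum_sq_sym_skew_split) (auto simp: W_sym)
  also have "\<dots> = (\<Sum>l<r. \<Sum>m<r. (sym_part $$ (l,m) - W $$ (l,m))\<^sup>2) + skew_mass"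
    unfolding skew_mass_def sum.distrib[symmetric] by (intro sum.cong refl) (auto simp: sym_part_def W_block)
  also have "(\<Sum>l<r. \<Sum>m<r. (sym_part $$ (l,m) - W $$ (l,m))\<^sup>2) \<le> (\<Sum>k<r. 1 - (lam k)\<^sup>2)"
    unfolding sum_sq_sym_part_minus_W eig_sign_def
    by (intro sum_mono sign_approx_sq eigenvalue_abs_le_1) simp
  also have "\<dots> = tail_mass + off_mass + skew_mass"
    using sum_sq_sym_part sum_sq_sym_part_eig by (simp add: sum_subtractf)
  finally show ?thesis by simp
qed

definition overlap :: "real mat \<Rightarrow> nat \<Rightarrow> nat \<Rightarrow> real" where
  "overlap U k m = (\<Sum>l<r. V $$ (l,k) * U $$ (l,m))\<^sup>2"

lemma overlap_block:
  assumes U: "U \<in> blk_orth s p" and "k < r" "m < r" "blk k \<noteq> blk m"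
  shows "overlap U k m = 0"
proof -
  have "(\<Sum>l<r. V $$ (l,k) * U $$ (l,m)) = 0"
  proof (rule sum.neutral, rule ballI)
    fix l assume "l \<in> {..<r}"
    thus "V $$ (l,k) * U $$ (l,m) = 0"
      using V_block[of l k] blk_orthD(3)[OF U, of l m] assms by (cases "blk l = blk k") auto
  qed
  thus ?thesis by (simp add: overlap_def)
qed

lemma fro_norm_W_minus_sq:
  assumes U: "U \<in> blk_orth s p"
  shows "(fro_norm (W - U * diag_vec r q * transpose_mat U))\<^sup>2
           = (\<Sum>k<r. \<Sum>m<r. overlap U k m * (eig_sign k - q (Suc m))\<^sup>2)"
proof -
  have "(fro_norm (W - U * diag_vec r q * transpose_mat U))\<^sup>2
      = (\<Sum>l<r. \<Sum>l'<r. (W $$ (l,l') - (U * mat_diag r (\<lambda>m. q (Suc m)) * transpose_mat U) $$ (l,l'))\<^sup>2)"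
    using fro_norm_diff_sq[OF W_carrier blk_orth_conj_carrier[OF U]] by (simp add: diag_vec_mat_diag)
  also have "\<dots> = (\<Sum>k<r. \<Sum>m<r. overlap U k m * (eig_sign k - q (Suc m))\<^sup>2)"
    unfolding W_def overlap_def by (rule sum_sq_conj_diag_diff[OF V_carrier V_orth blk_orthD(1,2)[OF U]])
  finally show ?thesis .
qed

lemma block_sign_count_eq:
  assumes U: "U \<in> blk_orth s p"
    and close: "(fro_norm (W - U * diag_vec r q * transpose_mat U))\<^sup>2 < 4"
    and t: "t = 1 \<or> t = -1"
  shows "card {k. k < r \<and> blk k = b \<and> eig_sign k = t} = card {k. k < r \<and> blk k = b \<and> q (Suc k) = t}"
proof -
  define e where "e m = q (Suc m)" for m
  have e: "e m = 1 \<or> e m = -1" if "m < r" for m using q_sign[of "Suc m"] that by (simp add: e_def)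
  have "(\<Sum>k<r. \<Sum>m<r. overlap U k m * \<bar>of_bool (eig_sign k = t) - of_bool (e m = t)\<bar>) < 1"
    using close e t eig_sign_cases unfolding fro_norm_W_minus_sq[OF U] e_def[symmetric]
    by (simp add: sign_indicator_diff sum_divide_distrib[symmetric])
  moreover have "\<bar>(\<Sum>k<r. if blk k = b then of_bool (eig_sign k = t) else 0)
        - (\<Sum>m<r. if blk m = b then of_bool (e m = t) else 0)\<bar>
      \<le> (\<Sum>k<r. \<Sum>m<r. overlap U k m * \<bar>of_bool (eig_sign k = t) - of_bool (e m = t)\<bar>)"
  proof (rule block_sum_transport)
    show "(\<Sum>m<r. overlap U k m) = 1" if "k < r" for k
      using sum_sq_orthogonal_overlap[OF V_carrier V_orth blk_orthD(1,2)[OF U] that]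
      by (simp add: overlap_def)
    show "(\<Sum>k<r. overlap U k m) = 1" if "m < r" for m
      using sum_sq_orthogonal_overlap[OF blk_orthD(1,2)[OF U] V_carrier V_orth that]
      by (simp add: overlap_def mult.commute)
    show "0 \<le> overlap U k m" for k m by (simp add: overlap_def)
    show "overlap U k m = 0" if "k < r" "m < r" "blk k \<noteq> blk m" for k m
      using overlap_block[OF U that] .
  qed
  ultimately have "\<bar>real (card {k. k < r \<and> blk k = b \<and> eig_sign k = t})
      - real (card {k. k < r \<and> blk k = b \<and> q (Suc k) = t})\<bar> < 1"
    by (simp add: sum_if_of_bool_card e_def)
  thus ?thesis by linarith
qed

lemma W_in_Qset1:
  assumes U: "U \<in> blk_orth s p"
    and close: "(fro_norm (W - U * diag_vec r q * transpose_mat U))\<^sup>2 < 4"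
  shows "W \<in> Qset1 s p q"
proof -
  define f where "f k = (blk k, q (Suc k))" for k
  define g where "g k = (blk k, eig_sign k)" for k
  have "card {k. k < r \<and> f k = (b, t)} = card {k. k < r \<and> g k = (b, t)}" for b t
  proof (cases "t = 1 \<or> t = -1")
    case True
    thus ?thesis using block_sign_count_eq[OF U close True, of b] by (simp add: f_def g_def conj_commute)
  next
    case False
    have "q (Suc k) = 1 \<or> q (Suc k) = -1" if "k < r" for k using q_sign[of "Suc k"] that by simp
    hence "{k. k < r \<and> f k = (b, t)} = {}" "{k. k < r \<and> g k = (b, t)} = {}"
      using False eig_sign_cases by (auto simp: f_def g_def)
    thus ?thesis by (simp only: card.empty)
  qed
  then obtain \<pi> where \<pi>: "bij_betw \<pi> {..<r} {..<r}" and fg: "\<And>k. k < r \<Longrightarrow> g (\<pi> k) = f k"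
    using label_preserving_permutation[of r f g] by auto
  have \<pi>r: "\<pi> k < r" if "k < r" for k using \<pi> that by (auto simp: bij_betw_def)
  define U' where "U' = mat r r (\<lambda>(i,k). V $$ (i, \<pi> k))"
  have "U' \<in> blk_orth s p"
    unfolding blk_orth_iff block_diagonal_def sp
    using permute_columns_orthogonal[OF \<pi> V_carrier V_orth] V_block \<pi>r fg
    by (auto simp: U'_def f_def g_def)
  moreover have "mat_diag r (\<lambda>k. eig_sign (\<pi> k)) = mat_diag r (\<lambda>k. q (Suc k))"
    using fg unfolding mat_diag_def by (intro eq_matI) (auto simp: f_def g_def)
  hence "W = U' * diag_vec (s p) q * transpose_mat U'"
    using permute_columns_conj_diag[OF \<pi> V_carrier, of eig_sign]
    by (simp add: sp diag_vec_mat_diag W_def U'_def)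
  ultimately show ?thesis unfolding Qset1_def by blast
qed

end

context residual_setting
begin

lemma exists_Qset1_near_upper_left:
  assumes "dist_set Q (Qset d K s p q) < 1"
  shows "\<exists>U \<in> blk_orth s p. (fro_norm (upper_left r Q - U * diag_vec r q * transpose_mat U))\<^sup>2 < 1"
proof -
  have "1\<^sub>m r \<in> blk_orth s p" by (simp add: blk_orth_iff block_diagonal_def sp)
  moreover have "K - r \<le> d - r" using Kd by simp
  ultimately have "Qset d K s p q \<noteq> {}" using stiefel_nonempty unfolding Qset_def sp by blast
  then obtain Wf where "Wf \<in> Qset d K s p q" and Wf1: "fro_norm (Q - Wf) < 1"
    using cInf_lessD[of "(\<lambda>W. fro_norm (Q - W)) ` Qset d K s p q" 1] assms
    unfolding dist_set_def by auto
  then obtain U V1 where U: "U \<in> blk_orth s p" and V1: "V1 \<in> stiefel (d - r) (K - r)"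
    and Wf: "Wf = four_block_mat (U * diag_vec r q * transpose_mat U) (0\<^sub>m r (K - r)) (0\<^sub>m (d - r) r) V1"
    unfolding Qset_def sp by blast
  define W0 where "W0 = U * diag_vec r q * transpose_mat U"
  have W0: "W0 \<in> carrier_mat r r" using blk_orth_conj_carrier[OF U] by (simp add: W0_def)
  have V1: "V1 \<in> carrier_mat (d - r) (K - r)" using V1 by (simp add: stiefel_def)
  have "Wf \<in> carrier_mat d K"
    using four_block_carrier_mat[OF W0 V1] rK Kd by (simp add: Wf W0_def)
  hence QW: "Q - Wf \<in> carrier_mat d K" using Q_carrier by (simp add: minus_carrier_mat)
  have eq: "upper_left r (Q - Wf) = upper_left r Q - W0"
  proof (rule eq_matI)
    fix i j assume "i < dim_row (upper_left r Q - W0)" "j < dim_col (upper_left r Q - W0)"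
    hence "i < r" "j < r" using W0 by (auto simp: upper_left_def)
    thus "upper_left r (Q - Wf) $$ (i,j) = (upper_left r Q - W0) $$ (i,j)"
      using Q_carrier W0 V1 rK Kd \<open>Wf \<in> carrier_mat d K\<close> by (simp add: upper_left_def Wf[folded W0_def])
  qed (use W0 in \<open>auto simp: upper_left_def\<close>)
  have "(fro_norm (upper_left r Q - W0))\<^sup>2 \<le> (fro_norm (Q - Wf))\<^sup>2"
    using fro_norm_upper_left_le[OF QW _ rK] rK Kd unfolding eq by simp
  also have "\<dots> < 1" using Wf1 fro_norm_nonneg[of "Q - Wf"] by (simp add: power_less_one_iff)
  finally show ?thesis using U unfolding W0_def by blast
qed

lemma upper_left_dist_bound:
  assumes "dist_set Q (Qset d K s p q) < 1"
  shows "(dist_set (upper_left r Q) (Qset1 s p q))\<^sup>2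
          \<le> 1 / (a r)\<^sup>2 * (10 + 6 * (6 * real p - 5) * inv_min_delta_sq a s p)
            * (fro_norm (R_res (A_mat d K r a) Q))\<^sup>2"
proof -
  obtain U where U: "U \<in> blk_orth s p"
    and close: "(fro_norm (upper_left r Q - U * diag_vec r q * transpose_mat U))\<^sup>2 < 1"
    using exists_Qset1_near_upper_left[OF assms] by blast
  obtain V lam where "V \<in> blk_orth s p" "sym_part = V * mat_diag r lam * transpose_mat V"
    using sym_part_spectral by blast
  then interpret spectral_setting s p d K r a q Q V lam by unfold_locales
  have W_bound: "(fro_norm (upper_left r Q - W))\<^sup>2 \<le> 1 / (a r)\<^sup>2 * (10 + 6 * (6 * real p - 5) * inv_min_delta_sq a s p)
      * (fro_norm (R_res (A_mat d K r a) Q))\<^sup>2"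
    using fro_norm_upper_left_minus_W defect_bound by linarith
  show ?thesis
  proof (cases "(fro_norm (upper_left r Q - W))\<^sup>2 < 1")
    case True
    hence "(fro_norm (W - U * diag_vec r q * transpose_mat U))\<^sup>2 < 4"
      using fro_norm_diff_sq_le[OF W_carrier upper_left_carrier[of r Q] blk_orth_conj_carrier[OF U, of q]] close
      by fastforce
    hence "W \<in> Qset1 s p q" by (rule W_in_Qset1[OF U])
    from dist_set_sq_le[OF this, of "upper_left r Q"] show ?thesis using W_bound by linarith
  next
    case False
    have "U * diag_vec r q * transpose_mat U \<in> Qset1 s p q" using U unfolding Qset1_def sp by blast
    from dist_set_sq_le[OF this, of "upper_left r Q"] show ?thesis using False close W_bound by linarith
  qed
qed

end

theorem proposition5:
  fixes d K r p :: nat and a q :: "nat \<Rightarrow> real" and s :: "nat \<Rightarrow> nat" and Q :: "real mat"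
  assumes "1 \<le> r" "r \<le> K" "K \<le> d"
    and a_mono: "\<And>i. 1 \<le> i \<Longrightarrow> i < r \<Longrightarrow> a i \<ge> a (i+1)"
    and a_pos: "a r > 0"
    and s0: "s 0 = 0" and sp: "s p = r" and s_mono: "\<And>i. i < p \<Longrightarrow> s i < s (i+1)"
    and a_blocks: "\<And>i k. i \<in> {1..p} \<Longrightarrow> s (i-1) < k \<Longrightarrow> k \<le> s i \<Longrightarrow> a k = a (s i)"
    and a_strict: "\<And>i. 1 \<le> i \<Longrightarrow> i < p \<Longrightarrow> a (s i) > a (s (i+1))"
    and q_sign: "\<And>i. i \<in> {1..r} \<Longrightarrow> q i = 1 \<or> q i = -1"
    and Q_st: "Q \<in> stiefel d K"
    and Q_close: "dist_set Q (Qset d K s p q) < 1"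
  shows "(dist_set (upper_left r Q) (Qset1 s p q))\<^sup>2
          \<le> 1 / (a r)\<^sup>2 * (10 + 6 * (6 * real p - 5) * inv_min_delta_sq a s p)
            * (fro_norm (R_res (A_mat d K r a) Q))\<^sup>2"
proof -
  interpret residual_setting s p d K r a q Q
  proof unfold_locales
    show "\<And>i. i < p \<Longrightarrow> s i < s (Suc i)" using s_mono by simp
  qed (fact assms)+
  show ?thesis by (rule upper_left_dist_bound[OF Q_close])
qed

end
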